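(* Let $N\ge1$ and let $A\in M_N(\mathbb{C})$ be such that $\sigma(A)\subset W(A)^\circ$. If $A_n\to A$ in $M_N(\mathbb{C})$, then $\limsup_{n\to\infty}\psi(A_n)\le\psi(A)$.
   Context: $M_N(\mathbb{C})$ denotes the algebra of complex $N\times N$ matrices acting on $\mathbb{C}^N$ with the Euclidean inner product, equipped with the operator norm. $\sigma(A)$ is the spectrum (set of eigenvalues) of $A$. The numerical range is $W(A):=\{\langle Ax,x\rangle: x\in\mathbb{C}^N,\ \|x\|=1\}$, and $W(A)^\circ$ denotes its interior in $\mathbb{C}$. The Crouzeix ratio of $A$ is $\psi(A):=\sup\{\|p(A)\|: p \text{ a polynomial with } |p|\le 1 \text{ on } W(A)\}$. *)

theory Defs
  imports "HOL-Analysis.Analysis" "HOL-Computational_Algebra.Polynomial"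
begin

text \<open>Complex N x N matrices are modelled as complex^'n^'n, acting on complex^'n
  (whose norm is the Euclidean norm); N = CARD('n) \<ge> 1.\<close>

definition opnorm :: "complex^'n^'n \<Rightarrow> real" where
  "opnorm A = onorm (\<lambda>x. A *v x)"

primrec mpow :: "complex^'n^'n \<Rightarrow> nat \<Rightarrow> complex^'n^'n" where
  "mpow A 0 = mat 1"
| "mpow A (Suc k) = A ** mpow A k"

definition poly_mat :: "complex poly \<Rightarrow> complex^'n^'n \<Rightarrow> complex^'n^'n" where
  "poly_mat p A = (\<Sum>i\<le>degree p. mat (coeff p i) ** mpow A i)"

definition cinner :: "complex^'n \<Rightarrow> complex^'n \<Rightarrow> complex" where
  "cinner x y = (\<Sum>i\<in>UNIV. x $ i * cnj (y $ i))"

definition numrange :: "complex^'n^'n \<Rightarrow> complex set" where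
  "numrange A = {cinner (A *v x) x | x. norm x = 1}"

definition mspectrum :: "complex^'n^'n \<Rightarrow> complex set" where
  "mspectrum A = {l. \<exists>x. x \<noteq> 0 \<and> A *v x = l *s x}"

definition crouzeix_ratio :: "complex^'n^'n \<Rightarrow> ereal" where
  "crouzeix_ratio A = Sup {ereal (opnorm (poly_mat p A)) | p.
      \<forall>z\<in>numrange A. norm (poly p z) \<le> 1}"

end

theory Submission
  imports Defs "HOL-Complex_Analysis.Residue_Theorem"
begin

text \<open>First, since \<open>\<sigma>(A)\<close> lies in the interior of \<open>W(A)\<close>, every eigenvalue of
  \<open>A\<close> can be surrounded by a small circle inside \<open>W(A)\<close>; for \<open>B\<close> near \<open>A\<close> these circles still
  enclose \<open>\<sigma>(B)\<close>, and the Riesz--Dunford formula together with the resolvent identity gives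
  \<open>\<parallel>q(B) - q(A)\<parallel> \<le> C \<parallel>B - A\<parallel>\<close> uniformly over all polynomials \<open>q\<close> with \<open>|q| \<le> 1\<close> on \<open>W(A)\<close>.
  Second, \<open>W\<close> is convex and moves by at most \<open>\<parallel>A' - A\<parallel>\<close> in Hausdorff distance, so if the disc
  \<open>D(z\<^sub>0, r)\<close> lies in \<open>W(A)\<close> and \<open>\<parallel>A' - A\<parallel> \<le> t r\<close>, then \<open>W(A')\<close> contains the contraction
  \<open>(1 - t) W(A) + t z\<^sub>0\<close>. Hence for \<open>|p| \<le> 1\<close> on \<open>W(A')\<close> the polynomial
  \<open>q(z) = p((1 - t) z + t z\<^sub>0)\<close> is admissible for \<open>A\<close>, and \<open>p(A') = q(B)\<close> with
  \<open>B = z\<^sub>0 + (A' - z\<^sub>0)/(1 - t)\<close> close to \<open>A\<close>; thus \<open>\<psi>(A') \<le> \<psi>(A) + C \<parallel>B - A\<parallel>\<close>.\<close>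

section \<open>Operator norm and matrix algebra\<close>

lemma opnorm_mult_vec_le: "norm ((A::complex^'n^'n) *v x) \<le> opnorm A * norm x"
  unfolding opnorm_def by (rule onorm) simp

lemma opnorm_nonneg: "0 \<le> opnorm (A::complex^'n^'n)"
  unfolding opnorm_def by (rule onorm_pos_le) simp

lemma opnorm_le: "(\<And>x. norm ((A::complex^'n^'n) *v x) \<le> b * norm x) \<Longrightarrow> opnorm A \<le> b"
  unfolding opnorm_def by (rule onorm_le)

lemma opnorm_zero [simp]: "opnorm (0::complex^'n^'n) = 0"
  using opnorm_le[of "0::complex^'n^'n" 0] opnorm_nonneg[of "0::complex^'n^'n"] by simp

lemma opnorm_add_le: "opnorm ((A::complex^'n^'n) + B) \<le> opnorm A + opnorm B"
proof (rule opnorm_le)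
  fix x
  have "norm ((A + B) *v x) \<le> norm (A *v x) + norm (B *v x)"
    by (simp add: matrix_vector_mult_add_rdistrib norm_triangle_ineq)
  also have "\<dots> \<le> opnorm A * norm x + opnorm B * norm x"
    by (intro add_mono opnorm_mult_vec_le)
  finally show "norm ((A + B) *v x) \<le> (opnorm A + opnorm B) * norm x"
    by (simp add: algebra_simps)
qed

lemma opnorm_matrix_mult_le: "opnorm ((A::complex^'n^'n) ** B) \<le> opnorm A * opnorm B"
proof (rule opnorm_le)
  fix x
  have "norm ((A ** B) *v x) = norm (A *v (B *v x))"
    by (simp add: matrix_vector_mul_assoc)
  also have "\<dots> \<le> opnorm A * norm (B *v x)"
    by (rule opnorm_mult_vec_le)
  also have "\<dots> \<le> opnorm A * (opnorm B * norm x)"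
    by (intro mult_left_mono opnorm_mult_vec_le opnorm_nonneg)
  finally show "norm ((A ** B) *v x) \<le> (opnorm A * opnorm B) * norm x"
    by (simp add: algebra_simps)
qed

lemma opnorm_minus_commute: "opnorm ((A::complex^'n^'n) - B) = opnorm (B - A)"
proof -
  have "(\<lambda>x. (A - B) *v x) = (\<lambda>x. - ((B - A) *v x))"
    by (simp add: fun_eq_iff matrix_vector_mult_diff_rdistrib)
  then show ?thesis
    by (simp add: opnorm_def onorm_neg)
qed

lemma mat_mult_vec: "(mat c :: 'a::semiring_1^'n^'n) *v x = c *s x"
proof -
  have "(\<Sum>j\<in>UNIV. (if i = j then c else 0) * x $ j) = c * x $ i" for i
    by (subst sum.cong[OF refl, of _ _ "\<lambda>j. if i = j then c * x $ j else 0"]) auto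
  then show ?thesis
    by (simp add: vec_eq_iff matrix_vector_mult_def mat_def)
qed

lemma norm_scalar_mult_vec: "norm (c *s (x::complex^'n)) = norm c * norm x"
  by (simp add: norm_vec_def norm_mult L2_set_right_distrib)

lemma opnorm_mat_le: "opnorm (mat c :: complex^'n^'n) \<le> norm c"
  by (rule opnorm_le) (simp add: mat_mult_vec norm_scalar_mult_vec)

lemma norm_nth_le_opnorm: "norm ((A::complex^'n^'n) $ i $ j) \<le> opnorm A"
proof -
  have "A $ i $ j = (A *v axis j 1) $ i"
    by (simp add: matrix_vector_mult_def axis_def if_distrib sum.delta cong: if_cong)
  then have "norm (A $ i $ j) \<le> norm (A *v axis j 1)"
    by (metis Finite_Cartesian_Product.norm_nth_le)
  also have "\<dots> \<le> opnorm A"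
    using opnorm_mult_vec_le[of A "axis j 1"] by (simp add: norm_axis_1)
  finally show ?thesis .
qed

lemma opnorm_le_sum_nth: "opnorm (A::complex^'n^'n) \<le> (\<Sum>i\<in>UNIV. \<Sum>j\<in>UNIV. norm (A $ i $ j))"
proof (rule opnorm_le)
  fix x
  have "norm (A *v x) \<le> (\<Sum>i\<in>UNIV. norm ((A *v x) $ i))"
    unfolding norm_vec_def by (rule L2_set_le_sum) simp
  also have "\<dots> \<le> (\<Sum>i\<in>UNIV. \<Sum>j\<in>UNIV. norm (A $ i $ j) * norm x)"
  proof (rule sum_mono)
    fix i
    have "norm ((A *v x) $ i) \<le> (\<Sum>j\<in>UNIV. norm (A $ i $ j * x $ j))"
      unfolding matrix_vector_mult_def by (simp add: norm_sum del: norm_vec_def)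
    also have "\<dots> \<le> (\<Sum>j\<in>UNIV. norm (A $ i $ j) * norm x)"
      by (intro sum_mono)
        (simp add: norm_mult mult_left_mono Finite_Cartesian_Product.norm_nth_le del: norm_vec_def)
    finally show "norm ((A *v x) $ i) \<le> (\<Sum>j\<in>UNIV. norm (A $ i $ j) * norm x)" .
  qed
  finally show "norm (A *v x) \<le> (\<Sum>i\<in>UNIV. \<Sum>j\<in>UNIV. norm (A $ i $ j)) * norm x"
    by (simp add: sum_distrib_right)
qed

lemma matrix_add_rdistrib: "((A::'a::semiring_1^'n^'m) + B) ** C = A ** C + B ** C"
  by (simp add: vec_eq_iff matrix_matrix_mult_def distrib_right sum.distrib)

lemma matrix_diff_rdistrib: "((A::'a::ring_1^'n^'m) - B) ** C = A ** C - B ** C"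
  by (simp add: vec_eq_iff matrix_matrix_mult_def left_diff_distrib sum_subtractf)

lemma matrix_diff_ldistrib: "(C::'a::ring_1^'n^'m) ** (A - B) = C ** A - C ** B"
  by (simp add: vec_eq_iff matrix_matrix_mult_def right_diff_distrib sum_subtractf)

lemma matrix_mult_sum_right: "(A::'a::semiring_1^'n^'m) ** sum f S = (\<Sum>i\<in>S. A ** f i)"
  by (induction S rule: infinite_finite_induct) (auto simp: matrix_add_ldistrib)

lemma mat_add: "(mat (a + b) :: 'a::semiring_1^'n^'n) = mat a + mat b"
  by (simp add: vec_eq_iff mat_def)

lemma mat_matrix_mult_nth: "((mat c :: 'a::comm_semiring_1^'n^'n) ** A) $ i $ j = c * A $ i $ j"
proof -
  have "(\<Sum>k\<in>UNIV. (if i = k then c else 0) * A $ k $ j) = c * A $ i $ j"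
    by (subst sum.cong[OF refl, of _ _ "\<lambda>k. if i = k then c * A $ k $ j else 0"]) auto
  then show ?thesis
    by (simp add: matrix_matrix_mult_def mat_def)
qed

lemma matrix_mult_mat_nth: "(A ** (mat c :: 'a::comm_semiring_1^'n^'n)) $ i $ j = c * A $ i $ j"
proof -
  have "(\<Sum>k\<in>UNIV. A $ i $ k * (if k = j then c else 0)) = c * A $ i $ j"
    by (subst sum.cong[OF refl, of _ _ "\<lambda>k. if k = j then c * A $ i $ k else 0"]) (auto simp: mult.commute)
  then show ?thesis
    by (simp add: matrix_matrix_mult_def mat_def)
qed

lemma mat_matrix_mult_commute: "(mat c :: 'a::comm_semiring_1^'n^'n) ** A = A ** mat c"
  by (simp add: vec_eq_iff mat_matrix_mult_nth matrix_mult_mat_nth)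

lemma mat_matrix_mult_left_commute:
  "(mat c :: 'a::comm_semiring_1^'n^'n) ** (X ** M) = X ** (mat c ** M)"
  by (metis mat_matrix_mult_commute matrix_mul_assoc)

lemma mat_mult_mat: "(mat a :: 'a::comm_semiring_1^'n^'n) ** mat b = mat (a * b)"
  by (simp add: vec_eq_iff mat_matrix_mult_nth) (simp add: mat_def)


section \<open>Polynomials of a matrix\<close>

lemma poly_mat_eq_sum:
  assumes "degree p \<le> n"
  shows "poly_mat p X = (\<Sum>i\<le>n. mat (coeff p i) ** mpow X i)"
proof -
  have "(\<Sum>i\<le>n. mat (coeff p i) ** mpow X i) = (\<Sum>i\<le>degree p. mat (coeff p i) ** mpow X i)"
    using assms by (intro sum.mono_neutral_right) (auto simp: coeff_eq_0)
  then show ?thesis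
    by (simp add: poly_mat_def)
qed

lemma poly_mat_pCons: "poly_mat (pCons a p) X = mat a + X ** poly_mat p X"
proof -
  have "poly_mat (pCons a p) X = (\<Sum>i\<le>Suc (degree p). mat (coeff (pCons a p) i) ** mpow X i)"
    by (rule poly_mat_eq_sum) (simp add: degree_pCons_le)
  also have "\<dots> = mat a ** mat 1 + (\<Sum>i\<le>degree p. mat (coeff p i) ** (X ** mpow X i))"
    by (subst sum.atMost_Suc_shift) simp
  also have "\<dots> = mat a + X ** poly_mat p X"
    by (simp add: poly_mat_def matrix_mult_sum_right mat_matrix_mult_left_commute)
  finally show ?thesis .
qed

lemma poly_mat_0 [simp]: "poly_mat 0 X = 0"
  by (simp add: poly_mat_def)

lemma poly_mat_const: "poly_mat [:c:] X = mat c"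
  by (simp add: poly_mat_pCons)

lemma poly_mat_linear: "poly_mat [:a, b:] X = mat a + X ** mat b"
  by (simp add: poly_mat_pCons)

lemma poly_mat_add: "poly_mat (p + q) X = poly_mat p X + poly_mat q X"
proof (induction p arbitrary: q)
  case (pCons a p)
  show ?case
  proof (cases q rule: pCons_cases)
    case (pCons b q')
    then show ?thesis
      using pCons.IH[of q'] by (simp add: poly_mat_pCons mat_add matrix_add_ldistrib algebra_simps)
  qed
qed simp

lemma poly_mat_smult: "poly_mat (smult c p) X = mat c ** poly_mat p X"
  by (induction p)
    (simp_all add: poly_mat_pCons matrix_add_ldistrib mat_mult_mat mat_matrix_mult_left_commute)

lemma poly_mat_mult: "poly_mat (p * q) X = poly_mat p X ** poly_mat q X"
proof (induction p)
  case (pCons a p)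
  have "poly_mat (pCons a p * q) X = poly_mat (smult a q + pCons 0 (p * q)) X"
    by simp
  also have "\<dots> = mat a ** poly_mat q X + X ** (poly_mat p X ** poly_mat q X)"
    by (simp add: poly_mat_add poly_mat_smult poly_mat_pCons pCons.IH)
  also have "\<dots> = poly_mat (pCons a p) X ** poly_mat q X"
    by (simp add: poly_mat_pCons matrix_add_rdistrib matrix_mul_assoc)
  finally show ?case .
qed simp

lemma poly_mat_pcompose: "poly_mat (pcompose p q) X = poly_mat p (poly_mat q X)"
  by (induction p)
    (simp_all add: pcompose_pCons poly_mat_add poly_mat_const poly_mat_mult poly_mat_pCons)


section \<open>The numerical range\<close>

lemma cinner_add_left: "cinner (u + v) w = cinner u w + cinner v w"
  by (simp add: cinner_def distrib_right sum.distrib)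

lemma cinner_add_right: "cinner w (u + v) = cinner w u + cinner w v"
  by (simp add: cinner_def distrib_left sum.distrib)

lemma cinner_diff_left: "cinner (u - v) w = cinner u w - cinner v w"
  by (simp add: cinner_def left_diff_distrib sum_subtractf)

lemma cinner_scale_left: "cinner (c *s u) w = c * cinner u w"
  by (simp add: cinner_def sum_distrib_left algebra_simps)

lemma cinner_scale_right: "cinner w (c *s u) = cnj c * cinner w u"
  by (simp add: cinner_def sum_distrib_left algebra_simps)

lemma cinner_self: "cinner u u = complex_of_real ((norm u)\<^sup>2)"
proof -
  have "(norm u)\<^sup>2 = (\<Sum>i\<in>UNIV. (norm (u $ i))\<^sup>2)"
    by (simp add: norm_vec_def L2_set_def sum_nonneg)
  then have "complex_of_real ((norm u)\<^sup>2) = (\<Sum>i\<in>UNIV. complex_of_real ((norm (u $ i))\<^sup>2))"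
    by simp
  also have "\<dots> = cinner u u"
    unfolding cinner_def by (intro sum.cong refl) (metis complex_norm_square)
  finally show ?thesis ..
qed

lemma inner_eq_Re_cinner: "inner u v = Re (cinner u v)"
  by (simp add: cinner_def inner_vec_def inner_complex_def Re_sum)

lemma norm_cinner_le: "norm (cinner u v) \<le> norm u * norm v"
proof (cases "cinner u v = 0")
  case False
  define \<omega> where "\<omega> = cnj (cinner u v) / complex_of_real (norm (cinner u v))"
  have "norm \<omega> = 1"
    using False by (simp add: \<omega>_def norm_divide)
  have "\<omega> * cinner u v = complex_of_real (norm (cinner u v))"
    using False unfolding \<omega>_def
    by (simp add: complex_norm_square[symmetric] power2_eq_square field_simps)
  then have "norm (cinner u v) = inner (\<omega> *s u) v"
    by (simp add: cinner_scale_left inner_eq_Re_cinner)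
  also have "\<dots> \<le> norm (\<omega> *s u) * norm v"
    by (rule norm_cauchy_schwarz)
  also have "\<dots> = norm u * norm v"
    by (simp add: norm_scalar_mult_vec \<open>norm \<omega> = 1\<close>)
  finally show ?thesis .
qed simp

lemma scaleR_eq_scalar_mult_vec: "r *\<^sub>R (z::complex^'n) = complex_of_real r *s z"
  by (simp add: vec_eq_iff) (metis scaleR_conv_of_real)

lemma cinner_form_scaleR:
  "cinner (B *v (r *\<^sub>R a)) (r *\<^sub>R a) = complex_of_real (r\<^sup>2) * cinner (B *v a) a"
  by (simp add: scaleR_eq_scalar_mult_vec vector_scalar_commute cinner_scale_left
      cinner_scale_right power2_eq_square)

lemma cinner_form_expand:
  "cinner (B *v (p *s a + q *s b)) (p *s a + q *s b) =
     p * cnj p * cinner (B *v a) a + p * cnj q * cinner (B *v a) b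
     + q * cnj p * cinner (B *v b) a + q * cnj q * cinner (B *v b) b"
  by (simp add: matrix_vector_right_distrib vector_scalar_commute cinner_add_left
      cinner_add_right cinner_scale_left cinner_scale_right algebra_simps)

lemma numrange_image: "numrange A = (\<lambda>x. cinner (A *v x) x) ` sphere 0 1"
  by (auto simp: numrange_def)

lemma continuous_on_cinner_form: "continuous_on S (\<lambda>x. cinner ((A::complex^'n^'n) *v x) x)"
proof -
  have "bounded_linear (\<lambda>x. (A *v x) $ i)" for i
    by (rule bounded_linear_compose[OF bounded_linear_vec_nth matrix_vector_mul_bounded_linear])
  then have "continuous_on S (\<lambda>x. (A *v x) $ i)" for i
    by (simp add: linear_continuous_on)
  moreover have "continuous_on S (\<lambda>x. x $ i)" for i :: 'n
    by (simp add: linear_continuous_on bounded_linear_vec_nth)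
  ultimately show ?thesis
    unfolding cinner_def by (intro continuous_intros)
qed

lemma compact_numrange: "compact (numrange (A::complex^'n^'n))"
  unfolding numrange_image
  by (intro compact_continuous_image continuous_on_cinner_form compact_sphere)

lemma numrange_affine: "numrange (mat c ** A + mat d) = (\<lambda>z. c * z + d) ` numrange (A::complex^'n^'n)"
proof -
  have "cinner ((mat c ** A + mat d) *v x) x = c * cinner (A *v x) x + d" if "x \<in> sphere 0 1" for x
    using that
    by (simp add: matrix_vector_mult_add_rdistrib mat_mult_vec cinner_add_left cinner_scale_left
        cinner_self flip: matrix_vector_mul_assoc)
  then show ?thesis
    unfolding numrange_image image_image by (rule image_cong[OF refl])
qed

lemma exists_unimodular_Im_eq_0: "\<exists>\<omega>. norm \<omega> = 1 \<and> Im (\<omega> * \<alpha> + cnj \<omega> * \<beta>) = 0"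
proof -
  define e where "e = \<alpha> - cnj \<beta>"
  have Im_eq: "Im (\<omega> * \<alpha> + cnj \<omega> * \<beta>) = Im (\<omega> * e)" for \<omega>
    by (simp add: e_def algebra_simps)
  show ?thesis
  proof (cases "e = 0")
    case False
    define \<omega> where "\<omega> = cnj e / complex_of_real (norm e)"
    have "\<omega> * e = complex_of_real (norm e)"
      using False unfolding \<omega>_def
      by (simp add: complex_norm_square[symmetric] power2_eq_square field_simps)
    moreover have "norm \<omega> = 1"
      using False by (simp add: \<omega>_def norm_divide)
    ultimately show ?thesis
      by (metis Im_eq Im_complex_of_real)
  next
    case True
    show ?thesis
      using Im_eq[of 1] True by (intro exI[of _ 1]) simp
  qed
qed

lemma numrange_rotate:
  fixes B :: "complex^'n^'n"
  assumes "norm x = 1" "cinner (B *v x) x = 0"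
  obtains x' where "norm x' = 1" "cinner (B *v x') x' = 0"
    "Im (cinner (B *v x') y + cinner (B *v y) x') = 0"
proof -
  obtain \<omega> where \<omega>: "norm \<omega> = 1" "Im (\<omega> * cinner (B *v x) y + cnj \<omega> * cinner (B *v y) x) = 0"
    using exists_unimodular_Im_eq_0 by metis
  have "\<omega> * cnj \<omega> = 1"
    using \<omega>(1) by (metis complex_norm_square of_real_1 power_one)
  then show thesis
    using assms \<omega>
    by (intro that[of "\<omega> *s x"])
      (simp_all add: norm_scalar_mult_vec vector_scalar_commute cinner_scale_left cinner_scale_right)
qed

lemma segment_ne_0_if_form_0_1:
  fixes B :: "complex^'n^'n"
  assumes x: "x \<noteq> 0" "cinner (B *v x) x = 0" and y: "cinner (B *v y) y = 1"
  shows "(1 - s) *\<^sub>R x + s *\<^sub>R y \<noteq> 0"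
proof
  assume v0: "(1 - s) *\<^sub>R x + s *\<^sub>R y = 0"
  show False
  proof (cases "s = 0")
    case True
    then show False
      using v0 x(1) by simp
  next
    case False
    have "y = (- (1 - s) / s) *\<^sub>R x"
      using v0 False
      by (metis (no_types, lifting) add.commute divide_inverse_commute eq_neg_iff_add_eq_0
          eq_vector_fraction_iff scaleR_minus_left)
    then have "cinner (B *v y) y = complex_of_real ((- (1 - s) / s)\<^sup>2) * cinner (B *v x) x"
      by (simp add: cinner_form_scaleR)
    then show False
      using x(2) y by simp
  qed
qed

text \<open>The core of the Toeplitz--Hausdorff theorem: after a unimodular rotation of \<open>x\<close> the form
  is real on the segment from \<open>x\<close> to \<open>y\<close>, so the intermediate value theorem applies to the
  normalised form.\<close>

lemma numrange_contains_unit_interval: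
  fixes B :: "complex^'n^'n"
  assumes "0 \<in> numrange B" "1 \<in> numrange B"
  shows "complex_of_real ` {0..1} \<subseteq> numrange B"
proof
  define Q where "Q a b = cinner (B *v a) b" for a b
  obtain x0 y where "norm x0 = 1" "Q x0 x0 = 0" and y: "norm y = 1" "Q y y = 1"
    using assms by (auto simp: numrange_def Q_def)
  then obtain x where x: "norm x = 1" "Q x x = 0" "Im (Q x y + Q y x) = 0"
    using numrange_rotate[of x0 B y] unfolding Q_def by metis
  define c where "c = Re (Q x y + Q y x)"
  define v where "v s = (1 - s) *\<^sub>R x + s *\<^sub>R y" for s :: real
  have Qv: "Q (v s) (v s) = complex_of_real (s\<^sup>2 + s * (1 - s) * c)" for s
  proof -
    have "Q (v s) (v s) = complex_of_real ((1 - s) * s) * (Q x y + Q y x) + complex_of_real (s\<^sup>2)"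
      unfolding v_def Q_def scaleR_eq_scalar_mult_vec cinner_form_expand
      using x(2) y(2) by (simp add: Q_def power2_eq_square algebra_simps)
    also have "Q x y + Q y x = complex_of_real c"
      using x(3) by (simp add: c_def complex_eq_iff)
    finally show ?thesis
      by simp
  qed
  have "x \<noteq> 0"
    using x(1) by auto
  then have v_nonzero: "v s \<noteq> 0" for s
    unfolding v_def by (rule segment_ne_0_if_form_0_1) (use x(2) y(2) in \<open>simp_all add: Q_def\<close>)
  define h where "h s = (s\<^sup>2 + s * (1 - s) * c) / (norm (v s))\<^sup>2" for s
  have "continuous_on {0..1} h"
    unfolding h_def using v_nonzero unfolding v_def by (intro continuous_intros) auto
  moreover have "h 0 = 0" "h 1 = 1"
    by (simp_all add: h_def v_def y(1))
  moreover fix u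
  assume "u \<in> complex_of_real ` {0..1}"
  then obtain u' where u': "u = complex_of_real u'" "0 \<le> u'" "u' \<le> 1"
    by auto
  ultimately obtain s where s: "s \<in> {0..1}" "h s = u'"
    using IVT'[of h 0 u' 1] by auto
  define w where "w = (1 / norm (v s)) *\<^sub>R v s"
  have "cinner (B *v w) w = complex_of_real ((1 / norm (v s))\<^sup>2) * Q (v s) (v s)"
    by (simp add: w_def Q_def cinner_form_scaleR)
  also have "\<dots> = complex_of_real (h s)"
    by (simp add: Qv h_def divide_inverse power_inverse mult.commute)
  finally have "cinner (B *v w) w = u"
    by (simp add: s(2) u'(1))
  moreover have "norm w = 1"
    using v_nonzero[of s] by (simp add: w_def)
  ultimately show "u \<in> numrange B"
    unfolding numrange_def by blast
qed

lemma convex_numrange: "convex (numrange (A::complex^'n^'n))"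
  unfolding convex_alt
proof (intro ballI allI impI)
  fix a b and u :: real
  assume a: "a \<in> numrange A" and b: "b \<in> numrange A" and u: "0 \<le> u \<and> u \<le> 1"
  show "(1 - u) *\<^sub>R a + u *\<^sub>R b \<in> numrange A"
  proof (cases "a = b")
    case True
    then show ?thesis
      using a by (simp add: algebra_simps)
  next
    case False
    define f where "f z = (z - a) / (b - a)" for z
    have "(\<lambda>z. (1 / (b - a)) * z + (- a / (b - a))) = f"
      by (simp add: fun_eq_iff f_def diff_divide_distrib)
    then have W: "numrange (mat (1 / (b - a)) ** A + mat (- a / (b - a))) = f ` numrange A"
      using numrange_affine by metis
    have "f a = 0" "f b = 1"
      using False by (simp_all add: f_def)
    then have "complex_of_real ` {0..1} \<subseteq> f ` numrange A"
      using numrange_contains_unit_interval a b unfolding W[symmetric] by (metis imageI W)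
    then obtain w where w: "w \<in> numrange A" "f w = complex_of_real u"
      using u by (metis atLeastAtMost_iff image_iff subsetD)
    then have "w = (1 - u) *\<^sub>R a + u *\<^sub>R b"
      using False by (simp add: f_def scaleR_conv_of_real field_simps)
    then show ?thesis
      using w(1) by simp
  qed
qed

lemma numrange_near:
  assumes "y \<in> numrange (A::complex^'n^'n)"
  shows "\<exists>y'\<in>numrange B. dist y y' \<le> opnorm (B - A)"
proof -
  obtain x where x: "norm x = 1" "y = cinner (A *v x) x"
    using assms by (auto simp: numrange_def)
  have "y - cinner (B *v x) x = cinner ((A - B) *v x) x"
    by (simp add: x matrix_vector_mult_diff_rdistrib cinner_diff_left)
  also have "norm \<dots> \<le> norm ((A - B) *v x) * norm x"
    by (rule norm_cinner_le)
  also have "\<dots> \<le> opnorm (B - A)"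
    using opnorm_mult_vec_le[of "A - B" x] x by (simp add: opnorm_minus_commute)
  finally show ?thesis
    using x(1) unfolding numrange_def dist_norm by blast
qed

text \<open>A linear functional separating the contracted point from \<open>K'\<close> loses at most \<open>t r\<close> (times its
  norm) between \<open>K\<close> and \<open>K'\<close>; but on the disc it varies by \<open>r\<close> around \<open>z\<^sub>0\<close>, and the contraction
  gives \<open>z\<^sub>0\<close> the weight \<open>t\<close>, which makes up the loss.\<close>

lemma closed_convex_contains_contraction:
  fixes K K' :: "'a::{real_inner,heine_borel} set"
  assumes K': "convex K'" "closed K'"
    and disc: "cball z0 r \<subseteq> K" "0 \<le> r"
    and t: "0 \<le> t" "t \<le> 1"
    and near: "\<And>y. y \<in> K \<Longrightarrow> \<exists>y'\<in>K'. dist y y' \<le> t * r"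
    and w: "w \<in> K"
  shows "(1 - t) *\<^sub>R w + t *\<^sub>R z0 \<in> K'"
proof (rule ccontr)
  define z where "z = (1 - t) *\<^sub>R w + t *\<^sub>R z0"
  assume "z \<notin> K'"
  then obtain a b where ab: "inner a z < b" "\<And>x. x \<in> K' \<Longrightarrow> b < inner a x"
    using separating_hyperplane_closed_point[OF K'] by blast
  have a0: "a \<noteq> 0"
    using ab near[OF w] by force
  have lower: "b - norm a * (t * r) \<le> inner a y" if y: "y \<in> K" for y
  proof -
    obtain y' where y': "y' \<in> K'" "dist y y' \<le> t * r"
      using near[OF y] by blast
    have "inner a y' - inner a y \<le> norm a * norm (y' - y)"
      by (metis Cauchy_Schwarz_ineq2 abs_le_D1 inner_diff_right)
    also have "\<dots> \<le> norm a * (t * r)"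
      using y'(2) by (intro mult_left_mono) (auto simp: dist_norm norm_minus_commute)
    finally show ?thesis
      using ab(2)[OF y'(1)] by linarith
  qed
  have "z0 - (r / norm a) *\<^sub>R a \<in> K"
    using disc by (auto simp: dist_norm)
  from lower[OF this] have "b - norm a * (t * r) + r * norm a \<le> inner a z0"
    using a0 by (simp add: inner_diff_right dot_square_norm power2_eq_square)
  moreover have "b - norm a * (t * r) \<le> inner a w"
    using lower[OF w] .
  moreover have "inner a z = (1 - t) * inner a w + t * inner a z0"
    by (simp add: z_def inner_add_right)
  ultimately have "(1 - t) * (b - norm a * (t * r)) + t * (b - norm a * (t * r) + r * norm a)
      \<le> inner a z"
    using t by (smt (verit) mult_left_mono)
  moreover have "(1 - t) * (b - norm a * (t * r)) + t * (b - norm a * (t * r) + r * norm a) = b"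
    by (simp add: algebra_simps)
  ultimately show False
    using ab(1) by simp
qed

lemma numrange_contains_contraction:
  fixes A B :: "complex^'n^'n"
  assumes "cball z0 r \<subseteq> numrange A" "0 \<le> r" "0 \<le> t" "t \<le> 1"
    and "opnorm (B - A) \<le> t * r" and "w \<in> numrange A"
  shows "(1 - t) *\<^sub>R w + t *\<^sub>R z0 \<in> numrange B"
proof -
  have "\<exists>y'\<in>numrange B. dist y y' \<le> t * r" if "y \<in> numrange A" for y
    using numrange_near[OF that, of B] assms(5) by force
  then show ?thesis
    using assms
    by (intro closed_convex_contains_contraction[OF convex_numrange
          compact_imp_closed[OF compact_numrange], of z0 r "numrange A"]) auto
qed


section \<open>Spectrum and resolvent\<close>

definition polyfun :: "(complex \<Rightarrow> complex) \<Rightarrow> bool" where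
  "polyfun f \<longleftrightarrow> (\<exists>p. \<forall>z. f z = poly p z)"

lemma polyfun_const: "polyfun (\<lambda>z. c)"
  unfolding polyfun_def by (rule exI[of _ "[:c:]"]) simp

lemma polyfun_ident: "polyfun (\<lambda>z. z)"
  unfolding polyfun_def by (rule exI[of _ "[:0, 1:]"]) simp

lemma polyfun_add: "polyfun f \<Longrightarrow> polyfun g \<Longrightarrow> polyfun (\<lambda>z. f z + g z)"
  unfolding polyfun_def by (metis poly_add)

lemma polyfun_diff: "polyfun f \<Longrightarrow> polyfun g \<Longrightarrow> polyfun (\<lambda>z. f z - g z)"
  unfolding polyfun_def by (metis poly_diff)

lemma polyfun_mult: "polyfun f \<Longrightarrow> polyfun g \<Longrightarrow> polyfun (\<lambda>z. f z * g z)"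
  unfolding polyfun_def by (metis poly_mult)

lemma polyfun_if: "polyfun f \<Longrightarrow> polyfun g \<Longrightarrow> polyfun (\<lambda>z. if c then f z else g z)"
  by (cases c) auto

lemma polyfun_sum: "(\<And>a. a \<in> S \<Longrightarrow> polyfun (f a)) \<Longrightarrow> polyfun (\<lambda>z. \<Sum>a\<in>S. f a z)"
  by (induction S rule: infinite_finite_induct) (simp_all add: polyfun_const polyfun_add)

lemma polyfun_prod: "(\<And>a. a \<in> S \<Longrightarrow> polyfun (f a)) \<Longrightarrow> polyfun (\<lambda>z. \<Prod>a\<in>S. f a z)"
  by (induction S rule: infinite_finite_induct) (simp_all add: polyfun_const polyfun_mult)

lemma polyfun_det:
  assumes "\<And>i j. polyfun (\<lambda>z. M z $ i $ j)"
  shows "polyfun (\<lambda>z. det (M z :: complex^'n^'n))"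
  unfolding det_def by (intro polyfun_sum polyfun_mult polyfun_const polyfun_prod assms)

lemma holomorphic_on_polyfun:
  assumes "polyfun f"
  shows "f holomorphic_on S"
proof -
  obtain p where "\<And>z. f z = poly p z"
    using assms unfolding polyfun_def by blast
  then have "f = (\<lambda>z. poly p z)"
    by (simp add: fun_eq_iff)
  then show ?thesis
    by (auto intro!: holomorphic_intros)
qed

definition charfun :: "complex^'n^'n \<Rightarrow> complex \<Rightarrow> complex" where
  "charfun X z = det (mat z - X)"

lemma polyfun_mat_minus_nth: "polyfun (\<lambda>z. (mat z - X) $ i $ j)"
  by (cases "i = j") (simp_all add: mat_def polyfun_diff polyfun_ident polyfun_const)

lemma polyfun_charfun: "polyfun (charfun X)"
  unfolding charfun_def by (rule polyfun_det[OF polyfun_mat_minus_nth])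

lemma mspectrum_iff_charfun_eq_0: "z \<in> mspectrum (X::complex^'n^'n) \<longleftrightarrow> charfun X z = 0"
proof -
  have lin: "Vector_Spaces.linear (*s) (*s) ((*v) (mat z - X))"
    by (rule matrix_vector_mul_linear_gen)
  have "charfun X z \<noteq> 0 \<longleftrightarrow> (\<forall>v. (mat z - X) *v v = 0 \<longrightarrow> v = 0)"
    using det_nz_iff_inj_gen[OF lin] vec.inj_iff_eq_0
    by (simp add: charfun_def matrix_of_matrix_vector_mul)
  moreover have "(mat z - X) *v v = 0 \<longleftrightarrow> X *v v = z *s v" for v
    by (auto simp: matrix_vector_mult_diff_rdistrib mat_mult_vec)
  ultimately show ?thesis
    by (auto simp: mspectrum_def)
qed

lemma mspectrum_norm_le: "z \<in> mspectrum (X::complex^'n^'n) \<Longrightarrow> norm z \<le> opnorm X"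
proof -
  assume "z \<in> mspectrum X"
  then obtain v where v: "v \<noteq> 0" "X *v v = z *s v"
    by (auto simp: mspectrum_def)
  have "norm z * norm v \<le> opnorm X * norm v"
    using opnorm_mult_vec_le[of X v] v by (simp add: norm_scalar_mult_vec)
  then show ?thesis
    using v(1) by simp
qed

lemma finite_mspectrum: "finite (mspectrum (X::complex^'n^'n))"
proof -
  obtain p where p: "\<And>z. charfun X z = poly p z"
    using polyfun_charfun[of X] by (auto simp: polyfun_def)
  define z0 where "z0 = complex_of_real (opnorm X + 1)"
  have "z0 \<notin> mspectrum X"
    using mspectrum_norm_le[of z0 X] opnorm_nonneg[of X] by (auto simp: z0_def)
  then have "p \<noteq> 0"
    by (auto simp: mspectrum_iff_charfun_eq_0 p)
  then have "finite {z. poly p z = 0}"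
    by (rule poly_roots_finite)
  moreover have "mspectrum X = {z. poly p z = 0}"
    by (auto simp: mspectrum_iff_charfun_eq_0 p)
  ultimately show ?thesis
    by simp
qed

text \<open>Cramer's rule for the columns of \<open>(z I - X)\<^sup>-\<^sup>1\<close>; unlike \<open>matrix_inv\<close>, this exhibits
  every entry as a quotient of polynomial functions of \<open>z\<close>.\<close>

definition resolvent :: "complex^'n^'n \<Rightarrow> complex \<Rightarrow> complex^'n^'n" where
  "resolvent X z = (\<chi> k j. det (\<chi> i l. if l = k then (if i = j then 1 else 0) else (mat z - X) $ i $ l)
      / charfun X z)"

lemma resolvent_right_inverse:
  assumes "z \<notin> mspectrum (X::complex^'n^'n)"
  shows "(mat z - X) ** resolvent X z = mat 1"
proof -
  have d0: "det (mat z - X) \<noteq> 0"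
    using assms by (simp add: mspectrum_iff_charfun_eq_0 charfun_def)
  have "((mat z - X) ** resolvent X z) $ i $ j = mat 1 $ i $ j" for i j
  proof -
    define b :: "complex^'n" where "b = (\<chi> i. if i = j then 1 else 0)"
    define x :: "complex^'n" where "x = (\<chi> k. resolvent X z $ k $ j)"
    have b_nth: "b $ i = (if i = j then 1 else 0)" for i
      by (simp add: b_def)
    have "x = (\<chi> k. det (\<chi> i l. if l = k then b $ i else (mat z - X) $ i $ l) / det (mat z - X))"
      unfolding x_def resolvent_def charfun_def b_nth by simp
    then have "(mat z - X) *v x = b"
      using cramer[OF d0] by blast
    moreover have "((mat z - X) ** resolvent X z) $ i $ j = ((mat z - X) *v x) $ i"
      by (simp add: matrix_matrix_mult_def matrix_vector_mult_def x_def)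
    ultimately show ?thesis
      by (simp add: b_def mat_def)
  qed
  then show ?thesis
    by (simp add: vec_eq_iff)
qed

lemma resolvent_left_inverse:
  assumes "z \<notin> mspectrum (X::complex^'n^'n)"
  shows "resolvent X z ** (mat z - X) = mat 1"
  using resolvent_right_inverse[OF assms] matrix_left_right_inverse by blast

lemma holomorphic_on_resolvent_nth:
  "(\<lambda>z. resolvent X z $ k $ j) holomorphic_on (- mspectrum X)"
proof -
  define numer where
    "numer z = det (\<chi> i l. if l = k then (if i = j then 1 else 0) else (mat z - X) $ i $ l)" for z
  have "polyfun numer"
    unfolding numer_def
    by (rule polyfun_det) (auto intro!: polyfun_if polyfun_const polyfun_mat_minus_nth)
  then have "(\<lambda>z. numer z / charfun X z) holomorphic_on (- mspectrum X)"
    by (intro holomorphic_on_divide holomorphic_on_polyfun polyfun_charfun)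
      (auto simp: mspectrum_iff_charfun_eq_0)
  then show ?thesis
    by (simp add: resolvent_def numer_def)
qed

lemma resolvent_nth_eq_right:
  assumes "z \<notin> mspectrum (X::complex^'n^'n)"
  shows "z * resolvent X z $ i $ j = mat 1 $ i $ j + (X ** resolvent X z) $ i $ j"
proof -
  have "((mat z - X) ** resolvent X z) $ i $ j = mat 1 $ i $ j"
    using resolvent_right_inverse[OF assms] by simp
  then show ?thesis
    by (simp add: matrix_diff_rdistrib mat_matrix_mult_nth algebra_simps)
qed

lemma resolvent_nth_eq_left:
  assumes "z \<notin> mspectrum (X::complex^'n^'n)"
  shows "z * resolvent X z $ i $ j = mat 1 $ i $ j + (resolvent X z ** X) $ i $ j"
proof -
  have "(resolvent X z ** (mat z - X)) $ i $ j = mat 1 $ i $ j"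
    using resolvent_left_inverse[OF assms] by simp
  then show ?thesis
    by (simp add: matrix_diff_ldistrib matrix_mult_mat_nth algebra_simps)
qed

lemma resolvent_identity:
  assumes "z \<notin> mspectrum A" "z \<notin> mspectrum B"
  shows "resolvent B z - resolvent A z = resolvent B z ** (B - A) ** resolvent A z"
proof -
  have "resolvent B z ** (B - A) ** resolvent A z
      = resolvent B z ** ((mat z - A) ** resolvent A z) - (resolvent B z ** (mat z - B)) ** resolvent A z"
    by (simp add: matrix_diff_ldistrib matrix_diff_rdistrib matrix_mul_assoc)
  also have "\<dots> = resolvent B z - resolvent A z"
    using assms by (simp add: resolvent_left_inverse resolvent_right_inverse)
  finally show ?thesis
    by simp
qed

lemma norm_le_opnorm_resolvent:
  assumes "z \<notin> mspectrum X"
  shows "norm v \<le> opnorm (resolvent X z) * norm ((mat z - X) *v v)"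
  using opnorm_mult_vec_le[of "resolvent X z" "(mat z - X) *v v"] assms
  by (simp add: matrix_vector_mul_assoc resolvent_left_inverse)

lemma resolvent_perturb:
  fixes A B :: "complex^'n^'n"
  assumes z: "z \<notin> mspectrum A" and M: "opnorm (resolvent A z) \<le> M"
    and small: "opnorm (B - A) * M \<le> 1/2"
  shows "z \<notin> mspectrum B" "opnorm (resolvent B z) \<le> 2 * M"
proof -
  have M0: "0 \<le> M"
    using M opnorm_nonneg[of "resolvent A z"] by linarith
  have key: "norm v \<le> 2 * M * norm ((mat z - B) *v v)" for v
  proof -
    have eq: "(mat z - A) *v v = (mat z - B) *v v + (B - A) *v v"
      by (simp add: matrix_vector_mult_diff_rdistrib)
    have "norm v \<le> opnorm (resolvent A z) * norm ((mat z - A) *v v)"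
      by (rule norm_le_opnorm_resolvent[OF z])
    also have "\<dots> \<le> M * norm ((mat z - A) *v v)"
      by (intro mult_right_mono M) simp
    also have "\<dots> \<le> M * (norm ((mat z - B) *v v) + opnorm (B - A) * norm v)"
      unfolding eq using M0
      by (intro mult_left_mono order.trans[OF norm_triangle_ineq] add_left_mono opnorm_mult_vec_le)
        auto
    also have "\<dots> = M * norm ((mat z - B) *v v) + (opnorm (B - A) * M) * norm v"
      by (simp add: algebra_simps)
    also have "\<dots> \<le> M * norm ((mat z - B) *v v) + 1/2 * norm v"
      using small by (intro add_left_mono mult_right_mono) auto
    finally show ?thesis
      by simp
  qed
  show z_B: "z \<notin> mspectrum B"
  proof
    assume "z \<in> mspectrum B"
    then obtain v where v: "v \<noteq> 0" "B *v v = z *s v"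
      by (auto simp: mspectrum_def)
    then have "(mat z - B) *v v = 0"
      by (simp add: matrix_vector_mult_diff_rdistrib mat_mult_vec)
    then show False
      using key[of v] v(1) by simp
  qed
  show "opnorm (resolvent B z) \<le> 2 * M"
  proof (rule opnorm_le)
    fix w
    show "norm (resolvent B z *v w) \<le> 2 * M * norm w"
      using key[of "resolvent B z *v w"] z_B
      by (simp add: matrix_vector_mul_assoc resolvent_right_inverse)
  qed
qed

lemma opnorm_resolvent_le_far:
  fixes X :: "complex^'n^'n"
  assumes "opnorm X < norm z"
  shows "opnorm (resolvent X z) \<le> 1 / (norm z - opnorm X)"
proof (rule opnorm_le)
  fix w
  have z: "z \<notin> mspectrum X"
    using mspectrum_norm_le[of z X] assms by auto
  define v where "v = resolvent X z *v w"
  have "(mat z - X) *v v = w"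
    using z by (simp add: v_def matrix_vector_mul_assoc resolvent_right_inverse)
  then have "z *s v - X *v v = w"
    by (simp add: matrix_vector_mult_diff_rdistrib mat_mult_vec)
  then have "z *s v = w + X *v v"
    by (simp add: algebra_simps)
  then have "norm z * norm v \<le> norm w + opnorm X * norm v"
    by (metis norm_scalar_mult_vec norm_triangle_ineq order.trans add_left_mono opnorm_mult_vec_le)
  then have "(norm z - opnorm X) * norm v \<le> norm w"
    by (simp add: algebra_simps)
  then show "norm (resolvent X z *v w) \<le> 1 / (norm z - opnorm X) * norm w"
    using assms by (simp add: v_def field_simps)
qed

lemma resolvent_bounded_on_compact:
  fixes A :: "complex^'n^'n"
  assumes K: "compact K" "K \<inter> mspectrum A = {}"
  obtains M where "0 \<le> M" "\<And>z. z \<in> K \<Longrightarrow> opnorm (resolvent A z) \<le> M"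
proof -
  have "\<exists>b. \<forall>z\<in>K. norm (resolvent A z $ i $ j) \<le> b" for i j
  proof -
    have "continuous_on K (\<lambda>z. resolvent A z $ i $ j)"
      using K(2) by (intro holomorphic_on_imp_continuous_on
          holomorphic_on_subset[OF holomorphic_on_resolvent_nth]) auto
    then have "compact ((\<lambda>z. resolvent A z $ i $ j) ` K)"
      using K(1) by (rule compact_continuous_image)
    then show ?thesis
      by (meson bounded_iff compact_imp_bounded image_eqI)
  qed
  then obtain b where b: "\<And>i j z. z \<in> K \<Longrightarrow> norm (resolvent A z $ i $ j) \<le> b i j"
    by metis
  define M where "M = (\<Sum>i\<in>UNIV. \<Sum>j\<in>UNIV. b i j)"
  have "opnorm (resolvent A z) \<le> M" if "z \<in> K" for z
  proof -
    have "opnorm (resolvent A z) \<le> (\<Sum>i\<in>UNIV. \<Sum>j\<in>UNIV. norm (resolvent A z $ i $ j))"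
      by (rule opnorm_le_sum_nth)
    also have "\<dots> \<le> M"
      unfolding M_def using b[OF that] by (intro sum_mono)
    finally show ?thesis .
  qed
  then show thesis
    using that[of "max M 0"] by (meson max.cobounded1 max.cobounded2 order.trans)
qed

lemma resolvent_bounded_near:
  fixes A :: "complex^'n^'n"
  assumes "compact K" "K \<inter> mspectrum A = {}"
  obtains \<delta> M where "0 < \<delta>" "0 \<le> M"
    "\<And>B z. opnorm (B - A) < \<delta> \<Longrightarrow> z \<in> K \<Longrightarrow> z \<notin> mspectrum B \<and> opnorm (resolvent B z) \<le> M"
proof -
  obtain M where M: "0 \<le> M" "\<And>z. z \<in> K \<Longrightarrow> opnorm (resolvent A z) \<le> M"
    using resolvent_bounded_on_compact[OF assms] by blast
  show thesis
  proof (rule that[of "1 / (2 * (M + 1))" "2 * (M + 1)"])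
    fix B z
    assume B: "opnorm (B - A) < 1 / (2 * (M + 1))" and z: "z \<in> K"
    have "opnorm (B - A) * (M + 1) \<le> 1 / (2 * (M + 1)) * (M + 1)"
      using B M(1) by (intro mult_right_mono) auto
    also have "\<dots> = 1/2"
      using M(1) by (simp add: field_simps)
    finally have "opnorm (B - A) * (M + 1) \<le> 1/2" .
    moreover have "z \<notin> mspectrum A" "opnorm (resolvent A z) \<le> M + 1"
      using assms(2) z M(2)[OF z] by auto
    ultimately show "z \<notin> mspectrum B \<and> opnorm (resolvent B z) \<le> 2 * (M + 1)"
      using resolvent_perturb by blast
  qed (use M(1) in auto)
qed

lemma mspectrum_subset_near:
  fixes A :: "complex^'n^'n"
  assumes "open U" "mspectrum A \<subseteq> U"
  obtains \<delta> where "0 < \<delta>" "\<And>B. opnorm (B - A) < \<delta> \<Longrightarrow> mspectrum B \<subseteq> U"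
proof -
  define K where "K = cball 0 (opnorm A + 1) - U"
  have "compact K" "K \<inter> mspectrum A = {}"
    using assms by (auto simp: K_def intro: compact_diff)
  then obtain \<delta> M where \<delta>: "0 < \<delta>"
    "\<And>B z. opnorm (B - A) < \<delta> \<Longrightarrow> z \<in> K \<Longrightarrow> z \<notin> mspectrum B"
    using resolvent_bounded_near by metis
  show thesis
  proof (rule that[of "min \<delta> 1"])
    fix B
    assume B: "opnorm (B - A) < min \<delta> 1"
    show "mspectrum B \<subseteq> U"
    proof
      fix z
      assume z: "z \<in> mspectrum B"
      have "norm z \<le> opnorm A + opnorm (B - A)"
        using mspectrum_norm_le[OF z] opnorm_add_le[of A "B - A"] by simp
      then show "z \<in> U"
        using \<delta>(2)[of B z] B z by (auto simp: K_def)
    qed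
  qed (use \<delta>(1) in simp)
qed


section \<open>Riesz--Dunford integrals\<close>

lemma contour_integral_circlepath_residues:
  fixes f :: "complex \<Rightarrow> complex"
  assumes pts: "finite pts" and holo: "f holomorphic_on (- pts)" and r: "0 < r"
    and sph: "sphere c r \<inter> pts = {}"
  shows "contour_integral (circlepath c r) f = 2 * pi * \<i> * (\<Sum>p\<in>pts \<inter> ball c r. residue f p)"
proof -
  have pim: "path_image (circlepath c r) = sphere c r"
    using r by (simp add: path_image_circlepath_nonneg)
  have "contour_integral (circlepath c r) f =
      2 * pi * \<i> * (\<Sum>p\<in>pts. winding_number (circlepath c r) p * residue f p)"
    by (rule Residue_theorem[of UNIV pts])
      (use pts holo sph pim in \<open>auto simp: Compl_eq_Diff_UNIV\<close>)
  also have "(\<Sum>p\<in>pts. winding_number (circlepath c r) p * residue f p) =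
      (\<Sum>p\<in>pts. if p \<in> ball c r then residue f p else 0)"
  proof (intro sum.cong refl)
    fix p
    assume p: "p \<in> pts"
    show "winding_number (circlepath c r) p * residue f p = (if p \<in> ball c r then residue f p else 0)"
    proof (cases "p \<in> ball c r")
      case True
      then have "winding_number (circlepath c r) p = 1"
        by (intro winding_number_circlepath) (simp add: dist_norm norm_minus_commute)
      then show ?thesis
        using True by simp
    next
      case False
      then have "p \<notin> cball c r"
        using p sph by auto
      then have "winding_number (circlepath c r) p = 0"
        by (intro winding_number_zero_outside[of _ "cball c r"]) (use r in \<open>auto simp: pim\<close>)
      then show ?thesis
        using False by simp
    qed
  qed
  also have "\<dots> = (\<Sum>p\<in>pts \<inter> ball c r. residue f p)"
    by (simp add: sum.inter_restrict[OF pts])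
  finally show ?thesis .
qed

lemma open_resolvent_set: "open (- mspectrum (X::complex^'n^'n))"
  using finite_mspectrum[of X] by (simp add: finite_imp_closed open_Compl)

lemma contour_integrable_resolvent_nth:
  assumes "valid_path g" "path_image g \<subseteq> - mspectrum X"
    and "f holomorphic_on (- mspectrum (X::complex^'n^'n))"
  shows "(\<lambda>z. f z * resolvent X z $ i $ j) contour_integrable_on g"
  by (rule contour_integrable_holomorphic_simple[OF _ open_resolvent_set assms(1,2)])
    (intro holomorphic_intros assms(3) holomorphic_on_resolvent_nth)

lemma mspectrum_subset_ball:
  assumes "opnorm (X::complex^'n^'n) < R"
  shows "mspectrum X \<subseteq> ball 0 R" "path_image (circlepath 0 R) \<subseteq> - mspectrum X"
proof -
  show sub: "mspectrum X \<subseteq> ball 0 R"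
    using mspectrum_norm_le[of _ X] assms by fastforce
  have "0 \<le> R"
    using assms opnorm_nonneg[of X] by linarith
  then show "path_image (circlepath 0 R) \<subseteq> - mspectrum X"
    using sub by (auto simp: path_image_circlepath_nonneg)
qed

lemma eq_0_if_norm_le_decay:
  fixes c :: "'a::real_normed_vector"
  assumes K: "0 \<le> K" and le: "\<And>r. m < r \<Longrightarrow> norm c \<le> K / (r - m)"
  shows "c = 0"
proof (rule ccontr)
  assume "c \<noteq> 0"
  then have c: "0 < norm c"
    by simp
  have "norm c \<le> K / ((m + (K + 1) / norm c) - m)"
    using c K by (intro le) simp
  also have "\<dots> = K / (K + 1) * norm c"
    by simp
  also have "\<dots> < norm c"
    using c K by (simp add: field_simps)
  finally show False
    by simp
qed

lemma norm_resolvent_nth_minus_pole_le: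
  fixes X :: "complex^'n^'n"
  assumes far: "opnorm X < norm z"
  shows "norm (resolvent X z $ i $ j - mat 1 $ i $ j / z)
    \<le> opnorm X / (norm z * (norm z - opnorm X))"
proof -
  have z: "z \<notin> mspectrum X" "z \<noteq> 0"
    using mspectrum_norm_le[of z X] opnorm_nonneg[of X] far by auto
  have "resolvent X z $ i $ j - mat 1 $ i $ j / z = (resolvent X z ** X) $ i $ j / z"
    using resolvent_nth_eq_left[OF z(1), of i j] z(2) by (simp add: field_simps)
  also have "norm \<dots> \<le> opnorm (resolvent X z ** X) / norm z"
    using norm_nth_le_opnorm[of "resolvent X z ** X" i j] by (simp add: norm_divide divide_right_mono)
  also have "\<dots> \<le> opnorm (resolvent X z) * opnorm X / norm z"
    using opnorm_matrix_mult_le[of "resolvent X z" X] by (simp add: divide_right_mono)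
  also have "\<dots> \<le> 1 / (norm z - opnorm X) * opnorm X / norm z"
    using opnorm_resolvent_le_far[OF far] opnorm_nonneg[of X]
    by (intro divide_right_mono mult_right_mono) auto
  also have "\<dots> = opnorm X / (norm z * (norm z - opnorm X))"
    by simp
  finally show ?thesis .
qed

lemma contour_integral_resolvent_circle_approx:
  fixes X :: "complex^'n^'n"
  assumes r: "opnorm X < r"
  shows "norm (contour_integral (circlepath 0 r) (\<lambda>z. resolvent X z $ i $ j) - 2 * pi * \<i> * mat 1 $ i $ j)
    \<le> 2 * pi * opnorm X / (r - opnorm X)"
proof -
  define m where "m = opnorm X"
  define f where "f z = resolvent X z $ i $ j" for z
  define \<delta> where "\<delta> = (mat 1 :: complex^'n^'n) $ i $ j"
  have m0: "0 \<le> m"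
    by (simp add: m_def opnorm_nonneg)
  have r0: "0 < r"
    using r m0 by (simp add: m_def)
  have "(\<lambda>z. 1 * resolvent X z $ i $ j) contour_integrable_on circlepath 0 r"
    by (intro contour_integrable_resolvent_nth valid_path_circlepath holomorphic_on_const
        mspectrum_subset_ball(2)[OF r])
  then have "(f has_contour_integral contour_integral (circlepath 0 r) f) (circlepath 0 r)"
    by (simp add: f_def[abs_def] has_contour_integral_integral)
  moreover have "((\<lambda>z. \<delta> / (z - 0)) has_contour_integral 2 * pi * \<i> * \<delta>) (circlepath 0 r)"
    using Cauchy_integral_circlepath_simple[of "\<lambda>z. \<delta>" 0 r 0] r0 by simp
  ultimately have int: "((\<lambda>z. f z - \<delta> / (z - 0)) has_contour_integral
      contour_integral (circlepath 0 r) f - 2 * pi * \<i> * \<delta>) (circlepath 0 r)"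
    by (rule has_contour_integral_diff)
  have "norm (contour_integral (circlepath 0 r) f - 2 * pi * \<i> * \<delta>) \<le> m / (r * (r - m)) * (2 * pi * r)"
  proof (rule has_contour_integral_bound_circlepath[OF int _ r0])
    show "0 \<le> m / (r * (r - m))"
      using r r0 m0 by (simp add: m_def)
    fix z :: complex
    assume "norm (z - 0) = r"
    then show "norm (f z - \<delta> / (z - 0)) \<le> m / (r * (r - m))"
      using norm_resolvent_nth_minus_pole_le[of X z i j] r by (simp add: f_def \<delta>_def m_def)
  qed
  also have "\<dots> = 2 * pi * m / (r - m)"
    using r0 by simp
  finally show ?thesis
    by (simp add: f_def[abs_def] \<delta>_def m_def)
qed

text \<open>The integral over a circle enclosing the spectrum does not depend on the radius, and it
  is \<open>2\<pi>i \<delta>\<^sub>i\<^sub>j + O(1/r)\<close> because \<open>z R(z) = I + R(z) X\<close>.\<close>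

lemma has_contour_integral_resolvent_big_circle:
  fixes X :: "complex^'n^'n"
  assumes R: "opnorm X < R"
  shows "((\<lambda>z. resolvent X z $ i $ j) has_contour_integral 2 * pi * \<i> * mat 1 $ i $ j) (circlepath 0 R)"
proof -
  define f where "f z = resolvent X z $ i $ j" for z
  have residues: "contour_integral (circlepath 0 r) f = 2 * pi * \<i> * (\<Sum>p\<in>mspectrum X. residue f p)"
    if r: "opnorm X < r" for r
  proof -
    have "0 < r"
      using r opnorm_nonneg[of X] by linarith
    moreover have "sphere 0 r \<inter> mspectrum X = {}"
      using mspectrum_subset_ball(1)[OF r] by auto
    ultimately have "contour_integral (circlepath 0 r) f
        = 2 * pi * \<i> * (\<Sum>p\<in>mspectrum X \<inter> ball 0 r. residue f p)"
      unfolding f_def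
      by (intro contour_integral_circlepath_residues finite_mspectrum holomorphic_on_resolvent_nth)
    then show ?thesis
      using mspectrum_subset_ball(1)[OF r] by (simp add: Int_absorb2)
  qed
  have approx: "norm (contour_integral (circlepath 0 R) f - 2 * pi * \<i> * mat 1 $ i $ j)
      \<le> 2 * pi * opnorm X / (r - opnorm X)" if "opnorm X < r" for r
    using contour_integral_resolvent_circle_approx[OF that, of i j] residues[OF that] residues[OF R]
    by (simp add: f_def[abs_def])
  have "contour_integral (circlepath 0 R) f - 2 * pi * \<i> * mat 1 $ i $ j = 0"
    by (rule eq_0_if_norm_le_decay[OF _ approx]) (simp add: opnorm_nonneg)
  moreover have "(\<lambda>z. 1 * resolvent X z $ i $ j) contour_integrable_on circlepath 0 R"
    by (intro contour_integrable_resolvent_nth valid_path_circlepath holomorphic_on_const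
        mspectrum_subset_ball(2)[OF R])
  ultimately show ?thesis
    using has_contour_integral_integral by (fastforce simp: f_def[abs_def])
qed

lemma poly_pCons_mult_resolvent_nth:
  assumes "z \<notin> mspectrum (X::complex^'n^'n)"
  shows "a * resolvent X z $ i $ j
      + (poly p z * mat 1 $ i $ j + (\<Sum>l\<in>UNIV. X $ i $ l * (poly p z * resolvent X z $ l $ j)))
    = poly (pCons a p) z * resolvent X z $ i $ j"
proof -
  have "z * resolvent X z $ i $ j = mat 1 $ i $ j + (\<Sum>l\<in>UNIV. X $ i $ l * resolvent X z $ l $ j)"
    using assms by (simp add: resolvent_nth_eq_right matrix_matrix_mult_def)
  moreover have "poly (pCons a p) z * resolvent X z $ i $ j
      = a * resolvent X z $ i $ j + poly p z * (z * resolvent X z $ i $ j)"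
    by (simp add: algebra_simps)
  ultimately show ?thesis
    by (simp add: distrib_left sum_distrib_left mult_ac)
qed

lemma contour_integral_poly_resolvent_big_circle:
  fixes X :: "complex^'n^'n"
  assumes R: "opnorm X < R"
  shows "contour_integral (circlepath 0 R) (\<lambda>z. poly q z * resolvent X z $ i $ j)
    = 2 * pi * \<i> * poly_mat q X $ i $ j"
proof (induction q arbitrary: i j)
  case (pCons a p)
  have pim: "path_image (circlepath 0 R) \<subseteq> - mspectrum X"
    by (rule mspectrum_subset_ball(2)[OF R])
  have IH: "((\<lambda>z. poly p z * resolvent X z $ l $ j) has_contour_integral
      2 * pi * \<i> * poly_mat p X $ l $ j) (circlepath 0 R)" for l
  proof -
    have "(\<lambda>z. poly p z * resolvent X z $ l $ j) contour_integrable_on circlepath 0 R"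
      by (intro contour_integrable_resolvent_nth valid_path_circlepath pim
          poly_holomorphic_on[OF holomorphic_on_ident])
    from has_contour_integral_integral[OF this] show ?thesis
      unfolding pCons.IH .
  qed
  have cauchy: "((\<lambda>z. poly p z * mat 1 $ i $ j) has_contour_integral 0) (circlepath 0 R)"
    by (rule Cauchy_theorem_convex_simple[of _ UNIV]) (auto intro!: holomorphic_intros)
  have "((\<lambda>z. a * resolvent X z $ i $ j + (poly p z * mat 1 $ i $ j
        + (\<Sum>l\<in>UNIV. X $ i $ l * (poly p z * resolvent X z $ l $ j))))
      has_contour_integral a * (2 * pi * \<i> * mat 1 $ i $ j)
        + (0 + (\<Sum>l\<in>UNIV. X $ i $ l * (2 * pi * \<i> * poly_mat p X $ l $ j)))) (circlepath 0 R)"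
    by (intro has_contour_integral_add has_contour_integral_lmul cauchy has_contour_integral_sum IH
        has_contour_integral_resolvent_big_circle[OF R]) auto
  then have "((\<lambda>z. poly (pCons a p) z * resolvent X z $ i $ j)
      has_contour_integral a * (2 * pi * \<i> * mat 1 $ i $ j)
        + (0 + (\<Sum>l\<in>UNIV. X $ i $ l * (2 * pi * \<i> * poly_mat p X $ l $ j)))) (circlepath 0 R)"
  proof (rule has_contour_integral_eq)
    fix z
    assume "z \<in> path_image (circlepath 0 R)"
    then have "z \<notin> mspectrum X"
      using pim by auto
    then show "a * resolvent X z $ i $ j + (poly p z * mat 1 $ i $ j
        + (\<Sum>l\<in>UNIV. X $ i $ l * (poly p z * resolvent X z $ l $ j)))
      = poly (pCons a p) z * resolvent X z $ i $ j"
      by (rule poly_pCons_mult_resolvent_nth)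
  qed
  moreover have "mat a $ i $ j = a * mat 1 $ i $ j"
    by (simp add: mat_def)
  then have "a * (2 * pi * \<i> * mat 1 $ i $ j)
        + (0 + (\<Sum>l\<in>UNIV. X $ i $ l * (2 * pi * \<i> * poly_mat p X $ l $ j)))
      = 2 * pi * \<i> * poly_mat (pCons a p) X $ i $ j"
    by (simp add: poly_mat_pCons matrix_matrix_mult_def distrib_left sum_distrib_left mult_ac)
  ultimately show ?case
    by (metis contour_integral_unique)
qed simp

lemma eventually_cball_subset:
  fixes x :: "'a::metric_space"
  assumes "x \<in> interior S"
  shows "eventually (\<lambda>r. cball x r \<subseteq> S) (at_right 0)"
proof -
  obtain e where e: "0 < e" "cball x e \<subseteq> S"
    using assms mem_interior_cball by blast
  have "eventually (\<lambda>r. r < e) (at_right (0::real))"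
    using order_tendstoD(2)[OF tendsto_ident_at e(1)] .
  then show ?thesis
  proof (rule eventually_mono)
    fix r :: real
    assume "r < e"
    then show "cball x r \<subseteq> S"
      using e(2) subset_cball[of r e x] by simp
  qed
qed

lemma obtain_separated_cballs:
  fixes L :: "'a::metric_space set"
  assumes "finite L" "L \<subseteq> interior S"
  obtains \<rho> where "0 < \<rho>" "\<And>a. a \<in> L \<Longrightarrow> cball a \<rho> \<subseteq> S"
    "\<And>a b. a \<in> L \<Longrightarrow> b \<in> L \<Longrightarrow> a \<noteq> b \<Longrightarrow> 2 * \<rho> \<le> dist a b"
proof -
  have cballs: "eventually (\<lambda>\<rho>. \<forall>a\<in>L. cball a \<rho> \<subseteq> S) (at_right 0)"
    using assms by (intro eventually_ball_finite ballI eventually_cball_subset) auto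
  have separated: "eventually (\<lambda>\<rho>. \<forall>a\<in>L. \<forall>b\<in>L. a \<noteq> b \<longrightarrow> 2 * \<rho> \<le> dist a b) (at_right 0)"
  proof (intro eventually_ball_finite[OF assms(1)] ballI)
    fix a b
    show "eventually (\<lambda>\<rho>. a \<noteq> b \<longrightarrow> 2 * \<rho> \<le> dist a b) (at_right 0)"
    proof (cases "a = b")
      case False
      then have "0 < dist a b / 2"
        by simp
      then have "eventually (\<lambda>\<rho>. \<rho> < dist a b / 2) (at_right (0::real))"
        using order_tendstoD(2)[OF tendsto_ident_at] by blast
      then show ?thesis
        by (rule eventually_mono) simp
    qed simp
  qed
  have "eventually (\<lambda>\<rho>. 0 < \<rho> \<and> (\<forall>a\<in>L. cball a \<rho> \<subseteq> S)
      \<and> (\<forall>a\<in>L. \<forall>b\<in>L. a \<noteq> b \<longrightarrow> 2 * \<rho> \<le> dist a b)) (at_right 0)"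
    by (intro eventually_conj eventually_at_right_less cballs separated)
  then have "\<exists>\<rho>. 0 < \<rho> \<and> (\<forall>a\<in>L. cball a \<rho> \<subseteq> S)
      \<and> (\<forall>a\<in>L. \<forall>b\<in>L. a \<noteq> b \<longrightarrow> 2 * \<rho> \<le> dist a b)"
    by (rule eventually_happens'[rotated]) simp
  then obtain \<rho> where "0 < \<rho>" "\<forall>a\<in>L. cball a \<rho> \<subseteq> S"
      "\<forall>a\<in>L. \<forall>b\<in>L. a \<noteq> b \<longrightarrow> 2 * \<rho> \<le> dist a b"
    by (elim exE conjE)
  then show thesis
    by (intro that) auto
qed

lemma separated_balls_disjoint:
  fixes L :: "'a::metric_space set"
  assumes "\<And>a b. a \<in> L \<Longrightarrow> b \<in> L \<Longrightarrow> a \<noteq> b \<Longrightarrow> 2 * \<rho> \<le> dist a b"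
    and "a \<in> L" "b \<in> L" "a \<noteq> b"
  shows "ball a \<rho> \<inter> ball b \<rho> = {}"
proof (rule equals0I)
  fix z
  assume "z \<in> ball a \<rho> \<inter> ball b \<rho>"
  then have "dist a z < \<rho>" "dist b z < \<rho>"
    by auto
  moreover have "2 * \<rho> \<le> dist a b"
    using assms by blast
  ultimately show False
    using dist_triangle[of a b z] dist_commute[of z b] by linarith
qed

lemma sphere_disjoint_separated_balls:
  fixes L :: "'a::metric_space set"
  assumes "\<And>a b. a \<in> L \<Longrightarrow> b \<in> L \<Longrightarrow> a \<noteq> b \<Longrightarrow> 2 * \<rho> \<le> dist a b" and "a \<in> L"
  shows "sphere a \<rho> \<inter> (\<Union>b\<in>L. ball b \<rho>) = {}"
proof (rule equals0I)
  fix z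
  assume "z \<in> sphere a \<rho> \<inter> (\<Union>b\<in>L. ball b \<rho>)"
  then obtain b where b: "b \<in> L" "dist a z = \<rho>" "dist b z < \<rho>"
    by auto
  then have "a \<noteq> b"
    by auto
  then have "2 * \<rho> \<le> dist a b"
    using assms b(1) by blast
  then show False
    using dist_triangle[of a b z] dist_commute[of z b] b(2,3) by linarith
qed

text \<open>The Riesz--Dunford formula \<open>q(X) = (2\<pi>i)\<^sup>-\<^sup>1 \<Sum>\<^sub>a \<ointegral>\<^sub>|\<^sub>z\<^sub>-\<^sub>a\<^sub>|\<^sub>=\<^sub>\<rho> q(z) R(z) dz\<close>: both sides equal the
  sum of the residues of \<open>q R\<close>, which the big circle evaluates.\<close>

lemma sum_contour_integral_circles_poly_resolvent:
  fixes X :: "complex^'n^'n"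
  assumes L: "finite L" "0 < \<rho>"
    and sep: "\<And>a b. a \<in> L \<Longrightarrow> b \<in> L \<Longrightarrow> a \<noteq> b \<Longrightarrow> 2 * \<rho> \<le> dist a b"
    and spec: "mspectrum X \<subseteq> (\<Union>a\<in>L. ball a \<rho>)"
  shows "(\<Sum>a\<in>L. contour_integral (circlepath a \<rho>) (\<lambda>z. poly q z * resolvent X z $ i $ j))
    = 2 * pi * \<i> * poly_mat q X $ i $ j"
proof -
  define f where "f z = poly q z * resolvent X z $ i $ j" for z
  define R where "R = opnorm X + 1"
  have R: "opnorm X < R" "0 < R"
    using opnorm_nonneg[of X] by (auto simp: R_def)
  have holo: "f holomorphic_on - mspectrum X"
    unfolding f_def by (intro holomorphic_intros holomorphic_on_resolvent_nth)
  have sph: "sphere a \<rho> \<inter> mspectrum X = {}" if "a \<in> L" for a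
  proof -
    have "sphere a \<rho> \<inter> mspectrum X \<subseteq> sphere a \<rho> \<inter> (\<Union>b\<in>L. ball b \<rho>)"
      by (rule Int_mono[OF order_refl spec])
    then show ?thesis
      using sphere_disjoint_separated_balls[OF sep that] by simp
  qed
  have disj: "(mspectrum X \<inter> ball a \<rho>) \<inter> (mspectrum X \<inter> ball b \<rho>) = {}"
    if "a \<in> L" "b \<in> L" "a \<noteq> b" for a b
    using separated_balls_disjoint[OF sep that] by auto
  have "(\<Sum>a\<in>L. contour_integral (circlepath a \<rho>) f)
      = (\<Sum>a\<in>L. 2 * pi * \<i> * (\<Sum>p\<in>mspectrum X \<inter> ball a \<rho>. residue f p))"
    by (intro sum.cong refl contour_integral_circlepath_residues[OF finite_mspectrum holo L(2) sph])
  also have "\<dots> = 2 * pi * \<i> * (\<Sum>a\<in>L. \<Sum>p\<in>mspectrum X \<inter> ball a \<rho>. residue f p)"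
    by (simp add: sum_distrib_left)
  also have "(\<Sum>a\<in>L. \<Sum>p\<in>mspectrum X \<inter> ball a \<rho>. residue f p)
      = (\<Sum>p\<in>(\<Union>a\<in>L. mspectrum X \<inter> ball a \<rho>). residue f p)"
    using L(1) finite_mspectrum[of X] disj by (intro sum.UNION_disjoint[symmetric]) auto
  also have "(\<Union>a\<in>L. mspectrum X \<inter> ball a \<rho>) = mspectrum X \<inter> ball 0 R"
    using spec mspectrum_subset_ball(1)[OF R(1)] by auto
  also have "2 * pi * \<i> * (\<Sum>p\<in>mspectrum X \<inter> ball 0 R. residue f p) = contour_integral (circlepath 0 R) f"
    using mspectrum_subset_ball(1)[OF R(1)]
    by (intro contour_integral_circlepath_residues[symmetric] finite_mspectrum holo R(2)) auto
  also have "\<dots> = 2 * pi * \<i> * poly_mat q X $ i $ j"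
    unfolding f_def by (rule contour_integral_poly_resolvent_big_circle[OF R(1)])
  finally show ?thesis
    by (simp add: f_def)
qed

lemma mspectrum_nonempty: "mspectrum (A::complex^'n^'n) \<noteq> {}"
proof
  fix i :: 'n
  assume "mspectrum A = {}"
  then have "(\<Sum>a\<in>{}. contour_integral (circlepath a 1) (\<lambda>z. poly [:1:] z * resolvent A z $ i $ i))
      = 2 * pi * \<i> * poly_mat [:1:] A $ i $ i"
    by (intro sum_contour_integral_circles_poly_resolvent) auto
  then show False
    by (simp add: poly_mat_const mat_def)
qed


section \<open>Uniform Lipschitz estimate for the polynomial calculus\<close>

lemma norm_contour_integral_poly_resolvent_diff_le:
  fixes A B :: "complex^'n^'n" and \<rho> E :: real
  assumes \<rho>: "0 < \<rho>" and E: "0 \<le> E"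
    and off: "sphere a \<rho> \<inter> mspectrum A = {}" "sphere a \<rho> \<inter> mspectrum B = {}"
    and R: "\<And>z. z \<in> sphere a \<rho> \<Longrightarrow> opnorm (resolvent B z ** (B - A) ** resolvent A z) \<le> E"
    and q: "\<And>z. z \<in> sphere a \<rho> \<Longrightarrow> norm (poly q z) \<le> 1"
  shows "norm (contour_integral (circlepath a \<rho>) (\<lambda>z. poly q z * resolvent B z $ i $ j)
      - contour_integral (circlepath a \<rho>) (\<lambda>z. poly q z * resolvent A z $ i $ j)) \<le> 2 * pi * \<rho> * E"
proof -
  define fA where "fA z = poly q z * resolvent A z $ i $ j" for z
  define fB where "fB z = poly q z * resolvent B z $ i $ j" for z
  have pim: "path_image (circlepath a \<rho>) = sphere a \<rho>"
    using \<rho> by (simp add: path_image_circlepath_nonneg)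
  have intA: "fA contour_integrable_on circlepath a \<rho>" and intB: "fB contour_integrable_on circlepath a \<rho>"
    unfolding fA_def fB_def using off pim
    by (auto intro!: contour_integrable_resolvent_nth valid_path_circlepath
        poly_holomorphic_on[OF holomorphic_on_ident])
  have "norm (contour_integral (circlepath a \<rho>) (\<lambda>z. fB z - fA z)) \<le> E * (2 * pi * \<rho>)"
  proof (rule has_contour_integral_bound_circlepath[OF has_contour_integral_integral E \<rho>])
    show "(\<lambda>z. fB z - fA z) contour_integrable_on circlepath a \<rho>"
      by (intro contour_integrable_diff intA intB)
    fix z
    assume "norm (z - a) = \<rho>"
    then have z: "z \<in> sphere a \<rho>"
      by (simp add: dist_norm norm_minus_commute)
    then have "z \<notin> mspectrum A" "z \<notin> mspectrum B"
      using off by auto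
    then have "resolvent B z $ i $ j - resolvent A z $ i $ j
        = (resolvent B z ** (B - A) ** resolvent A z) $ i $ j"
      using resolvent_identity by (metis vector_minus_component)
    then have "norm (fB z - fA z)
        = norm (poly q z) * norm ((resolvent B z ** (B - A) ** resolvent A z) $ i $ j)"
      by (simp add: fA_def fB_def norm_mult flip: right_diff_distrib)
    also have "\<dots> \<le> 1 * E"
      using q[OF z] R[OF z] norm_nth_le_opnorm[of "resolvent B z ** (B - A) ** resolvent A z" i j]
      by (intro mult_mono) auto
    finally show "norm (fB z - fA z) \<le> E"
      by simp
  qed
  moreover have "contour_integral (circlepath a \<rho>) (\<lambda>z. fB z - fA z)
      = contour_integral (circlepath a \<rho>) fB - contour_integral (circlepath a \<rho>) fA"
    by (rule contour_integral_diff[OF intB intA])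
  ultimately show ?thesis
    by (simp add: fA_def[abs_def] fB_def[abs_def] mult_ac)
qed

lemma norm_poly_mat_diff_nth_le:
  fixes A B :: "complex^'n^'n" and \<rho> E :: real
  assumes L: "finite L" "0 < \<rho>"
    and sep: "\<And>a b. a \<in> L \<Longrightarrow> b \<in> L \<Longrightarrow> a \<noteq> b \<Longrightarrow> 2 * \<rho> \<le> dist a b"
    and spec: "mspectrum A \<subseteq> (\<Union>a\<in>L. ball a \<rho>)" "mspectrum B \<subseteq> (\<Union>a\<in>L. ball a \<rho>)"
    and E: "0 \<le> E"
      "\<And>a z. a \<in> L \<Longrightarrow> z \<in> sphere a \<rho> \<Longrightarrow> opnorm (resolvent B z ** (B - A) ** resolvent A z) \<le> E"
    and q: "\<And>a z. a \<in> L \<Longrightarrow> z \<in> sphere a \<rho> \<Longrightarrow> norm (poly q z) \<le> 1"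
  shows "norm ((poly_mat q B - poly_mat q A) $ i $ j) \<le> real (card L) * \<rho> * E"
proof -
  define I where "I X a = contour_integral (circlepath a \<rho>) (\<lambda>z. poly q z * resolvent X z $ i $ j)"
    for X :: "complex^'n^'n" and a
  have off: "sphere a \<rho> \<inter> mspectrum X = {}"
    if "a \<in> L" "mspectrum X \<subseteq> (\<Union>a\<in>L. ball a \<rho>)" for a and X :: "complex^'n^'n"
    using sphere_disjoint_separated_balls[OF sep that(1)] that(2) by auto
  have eq: "2 * pi * \<i> * (poly_mat q B - poly_mat q A) $ i $ j = (\<Sum>a\<in>L. I B a - I A a)"
    unfolding I_def
    by (simp add: sum_contour_integral_circles_poly_resolvent[OF L sep] spec sum_subtractf
        right_diff_distrib)
  have "2 * pi * norm ((poly_mat q B - poly_mat q A) $ i $ j)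
      = norm (2 * pi * \<i> * (poly_mat q B - poly_mat q A) $ i $ j)"
    by (simp add: norm_mult)
  also have "\<dots> \<le> (\<Sum>a\<in>L. norm (I B a - I A a))"
    unfolding eq by (rule norm_sum)
  also have "\<dots> \<le> (\<Sum>a\<in>L. 2 * pi * \<rho> * E)"
    using off spec E q unfolding I_def
    by (intro sum_mono norm_contour_integral_poly_resolvent_diff_le[OF L(2) E(1)]) auto
  also have "\<dots> = 2 * pi * (real (card L) * \<rho> * E)"
    by simp
  finally show ?thesis
    by simp
qed

lemma obtain_spectral_circles:
  fixes A :: "complex^'n^'n"
  assumes "mspectrum A \<subseteq> interior S"
  obtains \<rho> \<delta> M where "0 < \<rho>" "0 < \<delta>" "0 \<le> M"
    "\<And>a. a \<in> mspectrum A \<Longrightarrow> cball a \<rho> \<subseteq> S"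
    "\<And>a b. a \<in> mspectrum A \<Longrightarrow> b \<in> mspectrum A \<Longrightarrow> a \<noteq> b \<Longrightarrow> 2 * \<rho> \<le> dist a b"
    "\<And>B. opnorm (B - A) < \<delta> \<Longrightarrow> mspectrum B \<subseteq> (\<Union>a\<in>mspectrum A. ball a \<rho>)"
    "\<And>B a z. opnorm (B - A) < \<delta> \<Longrightarrow> a \<in> mspectrum A \<Longrightarrow> z \<in> sphere a \<rho> \<Longrightarrow>
      opnorm (resolvent B z) \<le> M"
proof -
  obtain \<rho> where \<rho>: "0 < \<rho>" "\<And>a. a \<in> mspectrum A \<Longrightarrow> cball a \<rho> \<subseteq> S"
    and sep: "\<And>a b. a \<in> mspectrum A \<Longrightarrow> b \<in> mspectrum A \<Longrightarrow> a \<noteq> b \<Longrightarrow> 2 * \<rho> \<le> dist a b"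
    using obtain_separated_cballs[OF finite_mspectrum assms] by metis
  define U where "U = (\<Union>a\<in>mspectrum A. ball a \<rho>)"
  define \<Gamma> where "\<Gamma> = (\<Union>a\<in>mspectrum A. sphere a \<rho>)"
  have specA: "mspectrum A \<subseteq> U"
    using \<rho>(1) by (auto simp: U_def)
  have "open U"
    unfolding U_def by (intro open_UN ballI open_ball)
  then obtain \<delta>\<^sub>1 where \<delta>\<^sub>1: "0 < \<delta>\<^sub>1" "\<And>B. opnorm (B - A) < \<delta>\<^sub>1 \<Longrightarrow> mspectrum B \<subseteq> U"
    using mspectrum_subset_near[OF _ specA] by metis
  have "compact \<Gamma>"
    unfolding \<Gamma>_def by (intro compact_UN finite_mspectrum compact_sphere)
  moreover have "\<Gamma> \<inter> mspectrum A = {}"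
  proof -
    have "sphere a \<rho> \<inter> mspectrum A = {}" if "a \<in> mspectrum A" for a
      using sphere_disjoint_separated_balls[OF sep that] specA unfolding U_def by auto
    then show ?thesis
      unfolding \<Gamma>_def by auto
  qed
  ultimately obtain \<delta>\<^sub>2 M where \<delta>\<^sub>2: "0 < \<delta>\<^sub>2" "0 \<le> M"
    "\<And>B z. opnorm (B - A) < \<delta>\<^sub>2 \<Longrightarrow> z \<in> \<Gamma> \<Longrightarrow> z \<notin> mspectrum B \<and> opnorm (resolvent B z) \<le> M"
    using resolvent_bounded_near by metis
  show thesis
  proof (rule that[of \<rho> "min \<delta>\<^sub>1 \<delta>\<^sub>2" M])
    fix B
    assume "opnorm (B - A) < min \<delta>\<^sub>1 \<delta>\<^sub>2"
    then show "mspectrum B \<subseteq> (\<Union>a\<in>mspectrum A. ball a \<rho>)"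
      using \<delta>\<^sub>1(2) unfolding U_def by simp
  next
    fix B a z
    assume "opnorm (B - A) < min \<delta>\<^sub>1 \<delta>\<^sub>2" "a \<in> mspectrum A" "z \<in> sphere a \<rho>"
    then show "opnorm (resolvent B z) \<le> M"
      using \<delta>\<^sub>2(3)[of B z] unfolding \<Gamma>_def by auto
  qed (use \<rho> sep \<delta>\<^sub>1(1) \<delta>\<^sub>2(1,2) in auto)
qed

lemma poly_mat_locally_lipschitz:
  fixes A :: "complex^'n^'n" and S :: "complex set"
  assumes "mspectrum A \<subseteq> interior S"
  obtains C \<delta> where "0 \<le> C" "0 < \<delta>"
    "\<And>B q. opnorm (B - A) < \<delta> \<Longrightarrow> (\<forall>z\<in>S. norm (poly q z) \<le> 1) \<Longrightarrow>
      opnorm (poly_mat q B - poly_mat q A) \<le> C * opnorm (B - A)"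
proof (rule obtain_spectral_circles[OF assms])
  fix \<rho> \<delta> M
  assume \<rho>: "0 < \<rho>" and \<delta>: "0 < \<delta>" and M: "0 \<le> M"
    and disc: "\<And>a. a \<in> mspectrum A \<Longrightarrow> cball a \<rho> \<subseteq> S"
    and sep: "\<And>a b. a \<in> mspectrum A \<Longrightarrow> b \<in> mspectrum A \<Longrightarrow> a \<noteq> b \<Longrightarrow> 2 * \<rho> \<le> dist a b"
    and spec: "\<And>B. opnorm (B - A) < \<delta> \<Longrightarrow> mspectrum B \<subseteq> (\<Union>a\<in>mspectrum A. ball a \<rho>)"
    and res: "\<And>B a z. opnorm (B - A) < \<delta> \<Longrightarrow> a \<in> mspectrum A \<Longrightarrow> z \<in> sphere a \<rho> \<Longrightarrow>
      opnorm (resolvent B z) \<le> M"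
  define C where "C = real CARD('n) * real CARD('n) * (real (card (mspectrum A)) * \<rho> * (M * M))"
  show thesis
  proof (rule that[of C \<delta>])
    show "0 \<le> C"
      using \<rho> M by (simp add: C_def)
    fix B q
    assume B: "opnorm (B - A) < \<delta>" and q: "\<forall>z\<in>S. norm (poly q z) \<le> 1"
    have "opnorm (resolvent B z ** (B - A) ** resolvent A z) \<le> M * opnorm (B - A) * M"
      if "a \<in> mspectrum A" "z \<in> sphere a \<rho>" for a z
    proof -
      have "opnorm (resolvent B z ** (B - A) ** resolvent A z)
          \<le> opnorm (resolvent B z) * opnorm (B - A) * opnorm (resolvent A z)"
        by (intro order_trans[OF opnorm_matrix_mult_le] mult_right_mono opnorm_matrix_mult_le
            opnorm_nonneg)
      also have "\<dots> \<le> M * opnorm (B - A) * M"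
        using res[OF B that] res[of A, OF _ that] \<delta> M
        by (intro mult_mono mult_right_mono) (auto simp: opnorm_nonneg)
      finally show ?thesis .
    qed
    moreover have "norm (poly q z) \<le> 1" if "a \<in> mspectrum A" "z \<in> sphere a \<rho>" for a z
      using q disc[OF that(1)] that(2) by (auto dest: subsetD[OF sphere_cball])
    ultimately have "norm ((poly_mat q B - poly_mat q A) $ i $ j)
        \<le> real (card (mspectrum A)) * \<rho> * (M * opnorm (B - A) * M)" for i j
      using spec[OF B] spec[of A] \<delta> M opnorm_nonneg[of "B - A"]
      by (intro norm_poly_mat_diff_nth_le[OF finite_mspectrum \<rho> sep]) auto
    then have "opnorm (poly_mat q B - poly_mat q A) \<le> (\<Sum>i\<in>(UNIV::'n set). \<Sum>j\<in>(UNIV::'n set).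
        real (card (mspectrum A)) * \<rho> * (M * opnorm (B - A) * M))"
      by (intro order_trans[OF opnorm_le_sum_nth] sum_mono)
    also have "\<dots> = C * opnorm (B - A)"
      by (simp add: C_def algebra_simps)
    finally show "opnorm (poly_mat q B - poly_mat q A) \<le> C * opnorm (B - A)" .
  qed (rule \<delta>)
qed

lemma poly_mat_equicontinuous:
  fixes A :: "complex^'n^'n" and S :: "complex set"
  assumes "mspectrum A \<subseteq> interior S" and "0 < \<epsilon>"
  obtains \<eta> where "0 < \<eta>"
    "\<And>B q. opnorm (B - A) < \<eta> \<Longrightarrow> (\<forall>z\<in>S. norm (poly q z) \<le> 1) \<Longrightarrow>
      opnorm (poly_mat q B - poly_mat q A) \<le> \<epsilon>"
proof (rule poly_mat_locally_lipschitz[OF assms(1)])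
  fix C \<delta>
  assume C: "0 \<le> C" and \<delta>: "0 < \<delta>" and lip: "\<And>B q. opnorm (B - A) < \<delta> \<Longrightarrow>
      (\<forall>z\<in>S. norm (poly q z) \<le> 1) \<Longrightarrow> opnorm (poly_mat q B - poly_mat q A) \<le> C * opnorm (B - A)"
  show thesis
  proof (rule that[of "min \<delta> (\<epsilon> / (C + 1))"])
    fix B q
    assume B: "opnorm (B - A) < min \<delta> (\<epsilon> / (C + 1))" and q: "\<forall>z\<in>S. norm (poly q z) \<le> 1"
    have "opnorm (poly_mat q B - poly_mat q A) \<le> C * opnorm (B - A)"
      using lip[OF _ q] B by simp
    also have "\<dots> \<le> (C + 1) * (\<epsilon> / (C + 1))"
      using B C by (intro mult_mono) (auto simp: opnorm_nonneg)
    finally show "opnorm (poly_mat q B - poly_mat q A) \<le> \<epsilon>"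
      using C by simp
  qed (use \<delta> C assms(2) in simp)
qed


section \<open>The Crouzeix ratio\<close>

lemma opnorm_poly_mat_le_crouzeix_ratio:
  assumes "\<forall>z\<in>numrange A. norm (poly p z) \<le> 1"
  shows "ereal (opnorm (poly_mat p A)) \<le> crouzeix_ratio A"
  unfolding crouzeix_ratio_def using assms by (intro Sup_upper) auto

lemma crouzeix_ratio_le_of_contraction:
  fixes A A' B :: "complex^'n^'n" and t r :: real
  assumes disc: "cball z0 r \<subseteq> numrange A" "0 \<le> r" and t: "0 \<le> t" "t \<le> 1"
    and near: "opnorm (A' - A) \<le> t * r"
    and A': "A' = mat (complex_of_real t * z0) + B ** mat (1 - complex_of_real t)"
    and bound: "\<And>q. \<forall>z\<in>numrange A. norm (poly q z) \<le> 1 \<Longrightarrow> ereal (opnorm (poly_mat q B)) \<le> c"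
  shows "crouzeix_ratio A' \<le> c"
  unfolding crouzeix_ratio_def
proof (rule Sup_least, clarify)
  fix p
  assume p: "\<forall>z\<in>numrange A'. norm (poly p z) \<le> 1"
  define q where "q = pcompose p [:complex_of_real t * z0, 1 - complex_of_real t:]"
  have poly_q: "poly q w = poly p ((1 - t) *\<^sub>R w + t *\<^sub>R z0)" for w
    by (simp add: q_def poly_pcompose scaleR_conv_of_real algebra_simps)
  have "\<forall>w\<in>numrange A. norm (poly q w) \<le> 1"
  proof
    fix w
    assume "w \<in> numrange A"
    then have "(1 - t) *\<^sub>R w + t *\<^sub>R z0 \<in> numrange A'"
      by (rule numrange_contains_contraction[OF disc t near])
    then show "norm (poly q w) \<le> 1"
      using p by (simp add: poly_q)
  qed
  moreover have "poly_mat p A' = poly_mat q B"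
    by (simp add: q_def poly_mat_pcompose poly_mat_linear A')
  ultimately show "ereal (opnorm (poly_mat p A')) \<le> c"
    using bound by simp
qed

lemma rescale_contraction_eq:
  fixes A' :: "complex^'n^'n" and t :: real
  assumes "t \<noteq> 1"
  shows "A' = mat (complex_of_real t * z0)
    + (mat z0 + (A' - mat z0) ** mat (1 / (1 - complex_of_real t))) ** mat (1 - complex_of_real t)"
proof -
  have "1 - complex_of_real t \<noteq> 0"
    using assms by (metis eq_iff_diff_eq_0 of_real_eq_1_iff)
  moreover have "(mat (complex_of_real t * z0) :: complex^'n^'n) $ i $ j
      = complex_of_real t * mat z0 $ i $ j"
    and "(mat (z0 * complex_of_real t) :: complex^'n^'n) $ i $ j = complex_of_real t * mat z0 $ i $ j"
    for i j
    by (simp_all add: mat_def)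
  ultimately show ?thesis
    by (simp add: vec_eq_iff matrix_mult_mat_nth field_simps)
qed

lemma opnorm_rescale_diff_le:
  fixes A A' :: "complex^'n^'n" and t :: real
  assumes t: "0 \<le> t" "t \<le> 1/2"
  shows "opnorm (mat z0 + (A' - mat z0) ** mat (1 / (1 - complex_of_real t)) - A)
    \<le> 2 * opnorm (A' - A) + 2 * t * opnorm (A - mat z0)"
proof -
  define s where "s = complex_of_real (1 / (1 - t))"
  have s_eq: "1 / (1 - complex_of_real t) = s"
    by (simp add: s_def)
  have "norm s = 1 / (1 - t)"
    using t unfolding s_def norm_of_real by simp
  then have s: "norm s \<le> 2"
    using t by (simp add: divide_le_eq)
  have "s - 1 = complex_of_real (t / (1 - t))"
    using t by (simp add: s_def field_simps)
  then have "norm (s - 1) = t / (1 - t)"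
    using t by (simp only: norm_of_real) simp
  also have "\<dots> \<le> 2 * t"
  proof -
    have "t * (t * 2) \<le> t * 1"
      using t by (intro mult_left_mono) auto
    then show ?thesis
      using t by (simp add: field_simps)
  qed
  finally have s1: "norm (s - 1) \<le> 2 * t" .
  have "mat z0 + (A' - mat z0) ** mat s - A = (A' - A) ** mat s + (A - mat z0) ** mat (s - 1)"
    by (simp add: vec_eq_iff matrix_mult_mat_nth algebra_simps)
  then have "opnorm (mat z0 + (A' - mat z0) ** mat s - A)
      \<le> opnorm ((A' - A) ** mat s) + opnorm ((A - mat z0) ** mat (s - 1))"
    by (simp add: opnorm_add_le)
  also have "\<dots> \<le> opnorm (A' - A) * norm s + opnorm (A - mat z0) * norm (s - 1)"
    by (intro add_mono order_trans[OF opnorm_matrix_mult_le] mult_left_mono opnorm_mat_le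
        opnorm_nonneg)
  also have "\<dots> \<le> opnorm (A' - A) * 2 + opnorm (A - mat z0) * (2 * t)"
    using s s1 by (intro add_mono mult_left_mono opnorm_nonneg)
  finally show ?thesis
    by (simp add: s_eq algebra_simps)
qed

lemma crouzeix_ratio_le_near:
  fixes A A' :: "complex^'n^'n" and t r \<epsilon> :: real
  assumes disc: "cball z0 r \<subseteq> numrange A" "0 \<le> r" and t: "0 \<le> t" "t \<le> 1/2"
    and near: "opnorm (A' - A) \<le> t * r"
    and lip: "\<And>B q. opnorm (B - A) \<le> 2 * opnorm (A' - A) + 2 * t * opnorm (A - mat z0) \<Longrightarrow>
      \<forall>z\<in>numrange A. norm (poly q z) \<le> 1 \<Longrightarrow> opnorm (poly_mat q B - poly_mat q A) \<le> \<epsilon>"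
  shows "crouzeix_ratio A' \<le> crouzeix_ratio A + ereal \<epsilon>"
proof (rule crouzeix_ratio_le_of_contraction[OF disc _ _ near rescale_contraction_eq])
  fix q
  assume q: "\<forall>z\<in>numrange A. norm (poly q z) \<le> 1"
  define B where "B = mat z0 + (A' - mat z0) ** mat (1 / (1 - complex_of_real t))"
  have "opnorm (poly_mat q B - poly_mat q A) \<le> \<epsilon>"
    unfolding B_def by (rule lip[OF opnorm_rescale_diff_le[OF t] q])
  then have "ereal (opnorm (poly_mat q B)) \<le> ereal (opnorm (poly_mat q A)) + ereal \<epsilon>"
    using opnorm_add_le[of "poly_mat q A" "poly_mat q B - poly_mat q A"] by simp
  also have "\<dots> \<le> crouzeix_ratio A + ereal \<epsilon>"
    by (intro add_right_mono opnorm_poly_mat_le_crouzeix_ratio q)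
  finally show "ereal (opnorm (poly_mat q (mat z0 + (A' - mat z0) **
      mat (1 / (1 - complex_of_real t))))) \<le> crouzeix_ratio A + ereal \<epsilon>"
    by (simp add: B_def)
qed (use t in auto)

lemma crouzeix_ratio_upper_semicontinuous:
  fixes A :: "complex^'n^'n"
  assumes spec: "mspectrum A \<subseteq> interior (numrange A)" and \<epsilon>: "0 < \<epsilon>"
  obtains \<kappa> where "0 < \<kappa>"
    "\<And>A'. opnorm (A' - A) < \<kappa> \<Longrightarrow> crouzeix_ratio A' \<le> crouzeix_ratio A + ereal \<epsilon>"
proof -
  obtain z0 where "z0 \<in> mspectrum A"
    using mspectrum_nonempty by (metis ex_in_conv)
  then have "z0 \<in> interior (numrange A)"
    using spec by (rule subsetD[rotated])
  then obtain r where r: "0 < r" "cball z0 r \<subseteq> numrange A"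
    unfolding mem_interior_cball by (elim exE conjE)
  obtain \<eta> where \<eta>: "0 < \<eta>" and equi: "\<And>B q. opnorm (B - A) < \<eta> \<Longrightarrow>
      (\<forall>z\<in>numrange A. norm (poly q z) \<le> 1) \<Longrightarrow> opnorm (poly_mat q B - poly_mat q A) \<le> \<epsilon>"
    using poly_mat_equicontinuous[OF spec \<epsilon>] by metis
  define a where "a = opnorm (A - mat z0)"
  define t where "t = min (1/2) (\<eta> / (4 * (a + 1)))"
  define \<kappa> where "\<kappa> = min (t * r) (\<eta> / 4)"
  have a: "0 \<le> a"
    by (simp add: a_def opnorm_nonneg)
  have t: "0 < t" "t \<le> 1/2"
    using \<eta> a by (simp add: t_def) (unfold t_def, rule min.cobounded1)
  have "t \<le> \<eta> / (4 * (a + 1))"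
    by (simp add: t_def)
  then have ta: "t * a + t \<le> \<eta> / 4"
    using a by (simp add: field_simps)
  show thesis
  proof (rule that)
    show "0 < \<kappa>"
      using t(1) r(1) \<eta> by (simp add: \<kappa>_def)
    fix A'
    assume A': "opnorm (A' - A) < \<kappa>"
    show "crouzeix_ratio A' \<le> crouzeix_ratio A + ereal \<epsilon>"
    proof (rule crouzeix_ratio_le_near[OF r(2)])
      fix B q
      assume "opnorm (B - A) \<le> 2 * opnorm (A' - A) + 2 * t * opnorm (A - mat z0)"
        and q: "\<forall>z\<in>numrange A. norm (poly q z) \<le> 1"
      then have "opnorm (B - A) < \<eta>"
        using A' ta t(1) by (simp add: \<kappa>_def a_def)
      then show "opnorm (poly_mat q B - poly_mat q A) \<le> \<epsilon>"
        using equi q by blast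
    qed (use r t A' in \<open>auto simp: \<kappa>_def\<close>)
  qed
qed

theorem theorem2p2:
  fixes A :: "complex^'n^'n" and As :: "nat \<Rightarrow> complex^'n^'n"
  assumes "mspectrum A \<subseteq> interior (numrange A)"
    and "(\<lambda>n. opnorm (As n - A)) \<longlonglongrightarrow> 0"
  shows "limsup (\<lambda>n. crouzeix_ratio (As n)) \<le> crouzeix_ratio A"
proof (rule ereal_le_epsilon2)
  fix \<epsilon> :: real
  assume "0 < \<epsilon>"
  then obtain \<kappa> where "0 < \<kappa>"
    and usc: "\<And>A'. opnorm (A' - A) < \<kappa> \<Longrightarrow> crouzeix_ratio A' \<le> crouzeix_ratio A + ereal \<epsilon>"
    using crouzeix_ratio_upper_semicontinuous[OF assms(1)] by metis
  have "eventually (\<lambda>n. opnorm (As n - A) < \<kappa>) sequentially"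
    using order_tendstoD(2)[OF assms(2) \<open>0 < \<kappa>\<close>] .
  then have "eventually (\<lambda>n. crouzeix_ratio (As n) \<le> crouzeix_ratio A + ereal \<epsilon>) sequentially"
    by (rule eventually_mono) (rule usc)
  then show "limsup (\<lambda>n. crouzeix_ratio (As n)) \<le> crouzeix_ratio A + ereal \<epsilon>"
    by (rule Limsup_bounded)
qed

end
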